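(* Let $(M,d)$ be a pointed metric space. The space $\mathrm{Lip}_0(M)$ has the SD2P if and only if for every $n\in\mathbb N$, all optimal $\mu_1,\dots,\mu_n\in ba(\widetilde M)$ with $\|\mu_i\|=1$, and every $\gamma\in(0,1)$, there exist subsets $A_1,\dots,A_n\subseteq\widetilde M$ and $u,v\in M$ with $u\ne v$ such that for every $i\in\{1,\dots,n\}$, $\mu_i(A_i)\ge\gamma$ and both $A_i\cup\{(u,v)\}$ and $A_i\cup\{(v,u)\}$ are $\gamma$-cyclically monotonic.
   Context: $M$ has base point $0$; $\mathrm{Lip}_0(M)$ is the real Banach space of Lipschitz $f\colon M\to\mathbb R$ with $f(0)=0$, normed by the best Lipschitz constant. A Banach space $X$ has the strong diameter 2 property (SD2P) if for all $n\in\mathbb N$, $\lambda_1,\dots,\lambda_n\ge0$ with $\sum\lambda_i=1$ and slices $S_1,\dots,S_n$ of $B_X$ (a slice is $\{x\in B_X:x^*(x)>1-\alpha\}$ with $\|x^*\|=1$, $\alpha>0$), the set $\sum_i\lambda_iS_i$ has diameter $2$. $\widetilde M=\{(x,y)\in M\times M:x\ne y\}$. $ba(\widetilde M)$ is the Banach space of bounded finitely additive signed measures on the power set of $\widetilde M$ with norm $|\mu|(\widetilde M)$. $\Phi f(x,y)=(f(x)-f(y))/d(x,y)$ and $(\Phi^*\mu)(f)=\int_{\widetilde M}\Phi f\,d\mu$. $\mu$ is optimal if positive and $\|\Phi^*\mu\|=\|\mu\|$. For $\gamma\in(0,1]$, $A\subseteq\widetilde M$ is $\gamma$-cyclically monotonic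 if for every finite sequence $(x_1,y_1),\dots,(x_k,y_k)\in A$, with $y_{k+1}=y_1$, $\sum_{i=1}^k\min\{d(x_i,y_{i+1})-\gamma d(x_i,y_i),\,d(y_i,y_{i+1})\}\ge0$. *)

theory Defs
  imports "HOL-Analysis.Analysis"
begin

definition offdiag :: "('a \<times> 'a) set" where
  "offdiag = {(x, y). x \<noteq> y}"

section \<open>Lip_0(M) for a pointed metric space (M = UNIV of a metric_space type, base point z0)\<close>

definition Lip0 :: "'a::metric_space \<Rightarrow> ('a \<Rightarrow> real) set" where
  "Lip0 z0 = {f. f z0 = 0 \<and> (\<exists>L. \<forall>x y. \<bar>f x - f y\<bar> \<le> L * dist x y)}"

definition lipnorm :: "('a::metric_space \<Rightarrow> real) \<Rightarrow> real" where
  "lipnorm f = Sup (insert 0 {\<bar>f x - f y\<bar> / dist x y | x y. x \<noteq> y})"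

definition is_lip0_functional :: "'a::metric_space \<Rightarrow> (('a \<Rightarrow> real) \<Rightarrow> real) \<Rightarrow> bool" where
  "is_lip0_functional z0 \<phi> \<longleftrightarrow>
     (\<forall>f\<in>Lip0 z0. \<forall>g\<in>Lip0 z0. \<phi> (\<lambda>x. f x + g x) = \<phi> f + \<phi> g) \<and>
     (\<forall>c. \<forall>f\<in>Lip0 z0. \<phi> (\<lambda>x. c * f x) = c * \<phi> f) \<and>
     (\<exists>C. \<forall>f\<in>Lip0 z0. \<bar>\<phi> f\<bar> \<le> C * lipnorm f)"

definition dual_norm :: "'a::metric_space \<Rightarrow> (('a \<Rightarrow> real) \<Rightarrow> real) \<Rightarrow> real" where
  "dual_norm z0 \<phi> = Sup {\<bar>\<phi> f\<bar> | f. f \<in> Lip0 z0 \<and> lipnorm f \<le> 1}"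

definition slice :: "'a::metric_space \<Rightarrow> (('a \<Rightarrow> real) \<Rightarrow> real) \<Rightarrow> real \<Rightarrow> ('a \<Rightarrow> real) set" where
  "slice z0 \<phi> \<alpha> = {f \<in> Lip0 z0. lipnorm f \<le> 1 \<and> \<phi> f > 1 - \<alpha>}"

definition lip_diam :: "('a::metric_space \<Rightarrow> real) set \<Rightarrow> real" where
  "lip_diam S = Sup {lipnorm (\<lambda>x. g x - h x) | g h. g \<in> S \<and> h \<in> S}"

definition SD2P :: "'a::metric_space \<Rightarrow> bool" where
  "SD2P z0 \<longleftrightarrow>
     (\<forall>n::nat. n \<ge> 1 \<longrightarrow>
       (\<forall>(lam :: nat \<Rightarrow> real) (\<phi> :: nat \<Rightarrow> ('a \<Rightarrow> real) \<Rightarrow> real) (\<alpha> :: nat \<Rightarrow> real).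
          (\<forall>i\<in>{1..n}. lam i \<ge> 0) \<and> (\<Sum>i\<in>{1..n}. lam i) = 1 \<and>
          (\<forall>i\<in>{1..n}. is_lip0_functional z0 (\<phi> i) \<and> dual_norm z0 (\<phi> i) = 1 \<and> \<alpha> i > 0)
          \<longrightarrow> lip_diam {g. \<exists>f :: nat \<Rightarrow> 'a \<Rightarrow> real.
                          (\<forall>i\<in>{1..n}. f i \<in> slice z0 (\<phi> i) (\<alpha> i)) \<and>
                          g = (\<lambda>x. \<Sum>i\<in>{1..n}. lam i * f i x)} = 2))"

section \<open>ba(offdiag): bounded finitely additive signed measures on the power set\<close>

definition is_partition :: "'b set \<Rightarrow> 'b set set \<Rightarrow> bool" where
  "is_partition S P \<longleftrightarrow> finite P \<and> {} \<notin> P \<and> \<Union>P = S \<and>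
     (\<forall>A\<in>P. \<forall>B\<in>P. A \<noteq> B \<longrightarrow> A \<inter> B = {})"

definition refines :: "'b set set \<Rightarrow> 'b set set \<Rightarrow> bool" where
  "refines Q P \<longleftrightarrow> (\<forall>B\<in>Q. \<exists>C\<in>P. B \<subseteq> C)"

definition is_ba :: "(('a \<times> 'a) set \<Rightarrow> real) \<Rightarrow> bool" where
  "is_ba \<mu> \<longleftrightarrow>
     (\<forall>A B. A \<subseteq> offdiag \<and> B \<subseteq> offdiag \<and> A \<inter> B = {} \<longrightarrow> \<mu> (A \<union> B) = \<mu> A + \<mu> B) \<and>
     (\<exists>K. \<forall>P. is_partition offdiag P \<longrightarrow> (\<Sum>B\<in>P. \<bar>\<mu> B\<bar>) \<le> K)"

definition ba_norm :: "(('a \<times> 'a) set \<Rightarrow> real) \<Rightarrow> real" where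
  "ba_norm \<mu> = Sup {(\<Sum>B\<in>P. \<bar>\<mu> B\<bar>) | P. is_partition offdiag P}"

definition ba_positive :: "(('a \<times> 'a) set \<Rightarrow> real) \<Rightarrow> bool" where
  "ba_positive \<mu> \<longleftrightarrow> (\<forall>A. A \<subseteq> offdiag \<longrightarrow> \<mu> A \<ge> 0)"

text \<open>Integral of a bounded function against a bounded finitely additive measure,
  as the limit of Riemann-type sums along the net of finite partitions ordered by refinement.\<close>
definition ba_integral :: "(('a \<times> 'a) set \<Rightarrow> real) \<Rightarrow> ('a \<times> 'a \<Rightarrow> real) \<Rightarrow> real" where
  "ba_integral \<mu> g = (THE I. \<forall>\<epsilon>>0. \<exists>P. is_partition offdiag P \<and>
      (\<forall>Q t. is_partition offdiag Q \<and> refines Q P \<and> (\<forall>B\<in>Q. t B \<in> B) \<longrightarrow>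
         \<bar>(\<Sum>B\<in>Q. g (t B) * \<mu> B) - I\<bar> < \<epsilon>))"

definition Phi_star :: "(('a::metric_space \<times> 'a) set \<Rightarrow> real) \<Rightarrow> ('a \<Rightarrow> real) \<Rightarrow> real" where
  "Phi_star \<mu> f = ba_integral \<mu> (\<lambda>(x, y). (f x - f y) / dist x y)"

definition optimal :: "'a::metric_space \<Rightarrow> (('a \<times> 'a) set \<Rightarrow> real) \<Rightarrow> bool" where
  "optimal z0 \<mu> \<longleftrightarrow> ba_positive \<mu> \<and> dual_norm z0 (Phi_star \<mu>) = ba_norm \<mu>"

definition cyc_mono :: "real \<Rightarrow> ('a::metric_space \<times> 'a) set \<Rightarrow> bool" where
  "cyc_mono \<gamma> A \<longleftrightarrow>
     (\<forall>ps. ps \<noteq> [] \<and> set ps \<subseteq> A \<longrightarrow>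
        (\<Sum>i<length ps. min (dist (fst (ps ! i)) (snd (ps ! ((i + 1) mod length ps)))
                              - \<gamma> * dist (fst (ps ! i)) (snd (ps ! i)))
                             (dist (snd (ps ! i)) (snd (ps ! ((i + 1) mod length ps))))) \<ge> 0)"

end

theory Submission
  imports Defs
begin

text \<open>
  Slopes \<open>slope f (x, y) = (f x - f y) / d(x, y)\<close> embed \<open>Lip\<^sub>0(M)\<close> isometrically into the bounded
  functions on the off-diagonal.  Dominating by the supremum over the off-diagonal, the Hahn--Banach
  theorem writes every norm-one functional on \<open>Lip\<^sub>0(M)\<close> as \<open>\<Phi>\<^sup>*\<mu>\<close> for a positive finitely additive
  probability \<open>\<mu>\<close>, and these are exactly the optimal \<open>\<mu>\<close> of norm one.  A set of pairs is
  \<open>\<gamma>\<close>-cyclically monotone iff some 1-Lipschitz function has slope at least \<open>\<gamma>\<close> on all of it (an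
  infimum over chains in the style of Rockafellar).

  If \<open>Lip\<^sub>0(M)\<close> has the SD2P, equal-weight averages of the slices of depth \<open>(1 - \<gamma>)\<^sup>2/2\<close> defined by
  \<open>\<Phi>\<^sup>*\<mu>\<^sub>i\<close> have diameter 2, which yields \<open>f\<^sub>i, g\<^sub>i\<close> in the slices and a pair \<open>(u, v)\<close> at which every
  \<open>f\<^sub>i\<close> has slope above \<open>\<gamma>\<close> and every \<open>g\<^sub>i\<close> slope below \<open>-\<gamma>\<close>.  Since \<open>\<integral> slope f\<^sub>i + slope g\<^sub>i d\<mu>\<^sub>i\<close>
  is close to 2, the set \<open>A\<^sub>i\<close> where both are \<open>\<gamma>\<close>-steep has \<open>\<mu>\<^sub>i(A\<^sub>i) \<ge> \<gamma>\<close>, and \<open>f\<^sub>i\<close>, \<open>g\<^sub>i\<close> witness the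
  cyclic monotonicity of \<open>A\<^sub>i \<union> {(u, v)}\<close> and \<open>A\<^sub>i \<union> {(v, u)}\<close>.  Conversely, represent the functionals
  of given slices by measures \<open>\<mu>\<^sub>i\<close>; the functions witnessing cyclic monotonicity of the sets provided
  by the hypothesis are steep on a set of measure at least \<open>\<gamma>\<close>, hence lie in the slices, and the
  difference of their averages has slope at least \<open>2\<gamma>\<close> at \<open>(u, v)\<close>.
\<close>

section \<open>Lipschitz functions and slopes\<close>

lemma Lip0_iff_lipschitz: "f \<in> Lip0 z0 \<longleftrightarrow> f z0 = 0 \<and> (\<exists>C. C-lipschitz_on UNIV f)"
proof -
  have "(\<exists>L. \<forall>x y. \<bar>f x - f y\<bar> \<le> L * dist x y) \<longleftrightarrow> (\<exists>C. C-lipschitz_on UNIV f)"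
  proof
    assume "\<exists>L. \<forall>x y. \<bar>f x - f y\<bar> \<le> L * dist x y"
    then obtain L where L: "\<And>x y. \<bar>f x - f y\<bar> \<le> L * dist x y" by blast
    have "\<bar>f x - f y\<bar> \<le> max L 0 * dist x y" for x y
      using L[of x y] mult_right_mono[of L "max L 0" "dist x y"] by simp
    then show "\<exists>C. C-lipschitz_on UNIV f"
      by (intro exI[of _ "max L 0"] lipschitz_onI) (auto simp: dist_real_def)
  qed (auto simp: lipschitz_on_def dist_real_def)
  then show ?thesis by (simp add: Lip0_def)
qed

lemma lipnorm_bdd_above:
  assumes "C-lipschitz_on UNIV f"
  shows "bdd_above (insert 0 {\<bar>f x - f y\<bar> / dist x y | x y. x \<noteq> y})"
proof -
  have "\<bar>f x - f y\<bar> / dist x y \<le> C" if "x \<noteq> y" for x y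
    using lipschitz_onD[OF assms, of x y] that by (simp add: dist_real_def divide_le_eq)
  then show ?thesis
    using lipschitz_on_nonneg[OF assms] by (auto simp: bdd_above_def intro!: exI[of _ C])
qed

lemma slope_le_lipnorm:
  assumes "C-lipschitz_on UNIV f" "x \<noteq> y"
  shows "\<bar>f x - f y\<bar> / dist x y \<le> lipnorm f"
  unfolding lipnorm_def by (rule cSup_upper) (use assms lipnorm_bdd_above[OF assms(1)] in auto)

lemma lipnorm_nonneg: "C-lipschitz_on UNIV f \<Longrightarrow> 0 \<le> lipnorm f"
  unfolding lipnorm_def by (rule cSup_upper) (use lipnorm_bdd_above in auto)

lemma lipnorm_le:
  assumes "0 \<le> K" "\<And>x y. x \<noteq> y \<Longrightarrow> \<bar>f x - f y\<bar> / dist x y \<le> K"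
  shows "lipnorm f \<le> K"
  unfolding lipnorm_def by (rule cSup_least) (use assms in auto)

lemma lipnorm_le_iff:
  assumes "C-lipschitz_on UNIV f" "0 \<le> K"
  shows "lipnorm f \<le> K \<longleftrightarrow> K-lipschitz_on UNIV f"
proof
  assume K: "lipnorm f \<le> K"
  have "\<bar>f x - f y\<bar> \<le> K * dist x y" for x y
  proof (cases "x = y")
    case False
    have "\<bar>f x - f y\<bar> \<le> lipnorm f * dist x y"
      using slope_le_lipnorm[OF assms(1) False] False by (simp add: divide_le_eq)
    also have "\<dots> \<le> K * dist x y" using K by (simp add: mult_right_mono)
    finally show ?thesis .
  qed simp
  then show "K-lipschitz_on UNIV f"
    using assms(2) by (intro lipschitz_onI) (auto simp: dist_real_def)
next
  assume "K-lipschitz_on UNIV f"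
  then show "lipnorm f \<le> K"
    using assms(2) by (intro lipnorm_le) (auto dest: lipschitz_onD simp: dist_real_def divide_le_eq)
qed

lemma lipschitz_lipnorm: "C-lipschitz_on UNIV f \<Longrightarrow> (lipnorm f)-lipschitz_on UNIV f"
  using lipnorm_le_iff[of C f "lipnorm f"] lipnorm_nonneg by blast

lemma Lip0_unit_ball_iff: "f \<in> Lip0 z0 \<and> lipnorm f \<le> 1 \<longleftrightarrow> f z0 = 0 \<and> 1-lipschitz_on UNIV f"
  using lipnorm_le_iff[of _ f 1] by (auto simp: Lip0_iff_lipschitz)

lemma slice_iff: "f \<in> slice z0 \<phi> \<alpha> \<longleftrightarrow> f z0 = 0 \<and> 1-lipschitz_on UNIV f \<and> \<phi> f > 1 - \<alpha>"
  using Lip0_unit_ball_iff[of f z0] by (auto simp: slice_def)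

lemma Lip0_add: "f \<in> Lip0 z0 \<Longrightarrow> g \<in> Lip0 z0 \<Longrightarrow> (\<lambda>x. f x + g x) \<in> Lip0 z0"
  by (auto simp: Lip0_iff_lipschitz intro: lipschitz_on_add)

lemma Lip0_cmult: "f \<in> Lip0 z0 \<Longrightarrow> (\<lambda>x. c * f x) \<in> Lip0 z0"
  by (auto simp: Lip0_iff_lipschitz intro: lipschitz_on_cmult_real)

lemma Lip0_zero: "(\<lambda>x. 0) \<in> Lip0 z0"
  using lipschitz_on_constant by (auto simp: Lip0_iff_lipschitz)

lemma lipnorm_zero: "lipnorm (\<lambda>x. 0) = 0"
  by (intro antisym lipnorm_le lipnorm_nonneg[OF lipschitz_on_constant]) auto

lemma Lip0_offdiag_empty:
  fixes z0 :: "'a::metric_space"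
  assumes "(offdiag :: ('a \<times> 'a) set) = {}" "f \<in> Lip0 z0"
  shows "f = (\<lambda>x. 0)"
proof
  fix x :: 'a
  have "x = z0" using assms(1) by (auto simp: offdiag_def)
  then show "f x = 0" using assms(2) by (simp add: Lip0_def)
qed

definition slope :: "('a::metric_space \<Rightarrow> real) \<Rightarrow> 'a \<times> 'a \<Rightarrow> real" where
  "slope f = (\<lambda>(x, y). (f x - f y) / dist x y)"

lemma slope_Pair [simp]: "slope f (x, y) = (f x - f y) / dist x y"
  by (simp add: slope_def)

lemma Phi_star_slope: "Phi_star \<mu> f = ba_integral \<mu> (slope f)"
  by (simp add: Phi_star_def slope_def)

lemma slope_add: "slope (\<lambda>x. f x + g x) = (\<lambda>z. slope f z + slope g z)"
  by (auto simp: slope_def add_divide_distrib[symmetric] algebra_simps)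

lemma slope_cmult: "slope (\<lambda>x. c * f x) = (\<lambda>z. c * slope f z)"
  by (auto simp: slope_def right_diff_distrib[symmetric])

lemma slope_swap: "slope f (y, x) = - slope f (x, y)"
  by (simp add: dist_commute minus_divide_left)

lemma abs_slope_le:
  assumes "C-lipschitz_on UNIV f"
  shows "\<bar>slope f z\<bar> \<le> C"
proof (cases z)
  case (Pair x y)
  show ?thesis
  proof (cases "x = y")
    case False
    then show ?thesis
      using lipschitz_onD[OF assms, of x y] Pair by (simp add: dist_real_def abs_divide divide_le_eq)
  qed (use Pair lipschitz_on_nonneg[OF assms] in simp)
qed

lemma abs_slope_le_lipnorm: "C-lipschitz_on UNIV f \<Longrightarrow> \<bar>slope f z\<bar> \<le> lipnorm f"
  using abs_slope_le[OF lipschitz_lipnorm] .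

lemma bounded_slope: "C-lipschitz_on UNIV f \<Longrightarrow> bounded (slope f ` S)"
  using abs_slope_le unfolding bounded_real by blast

lemma slope_inj:
  assumes "f \<in> Lip0 z0" "g \<in> Lip0 z0" "slope f = slope g"
  shows "f = g"
proof
  fix x
  have "(f x - f z0) / dist x z0 = (g x - g z0) / dist x z0"
    using fun_cong[OF assms(3), of "(x, z0)"] by simp
  then show "f x = g x"
    using assms(1,2) by (cases "x = z0") (auto simp: Lip0_def divide_cancel_right)
qed

lemma lipnorm_le_Sup_slope:
  fixes f :: "'a::metric_space \<Rightarrow> real"
  assumes f: "C-lipschitz_on UNIV f" and ne: "(offdiag :: ('a \<times> 'a) set) \<noteq> {}"
  shows "lipnorm f \<le> Sup (slope f ` offdiag)"
proof -
  have bdd: "bdd_above (slope f ` offdiag)"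
    using bounded_imp_bdd_above[OF bounded_slope[OF f]] .
  have up: "\<bar>slope f (x, y)\<bar> \<le> Sup (slope f ` offdiag)" if "x \<noteq> y" for x y
  proof -
    have "(x, y) \<in> offdiag" "(y, x) \<in> offdiag" using that by (auto simp: offdiag_def)
    then have "slope f (x, y) \<le> Sup (slope f ` offdiag)" "slope f (y, x) \<le> Sup (slope f ` offdiag)"
      using cSup_upper[OF imageI bdd] by blast+
    then show ?thesis using slope_swap[of f y x] by linarith
  qed
  obtain x y :: 'a where "x \<noteq> y" using ne by (auto simp: offdiag_def)
  then have "0 \<le> Sup (slope f ` offdiag)" using up[of x y] by linarith
  then show ?thesis
    by (rule lipnorm_le) (use up in \<open>auto simp: abs_divide\<close>)
qed

definition oscillation_le :: "('b \<Rightarrow> real) \<Rightarrow> real \<Rightarrow> 'b set set \<Rightarrow> bool" where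
  "oscillation_le h \<delta> P \<longleftrightarrow> (\<forall>B\<in>P. \<forall>x\<in>B. \<forall>y\<in>B. \<bar>h x - h y\<bar> \<le> \<delta>)"

definition tagging :: "'b set set \<Rightarrow> ('b set \<Rightarrow> 'b) \<Rightarrow> bool" where
  "tagging P t \<longleftrightarrow> (\<forall>B\<in>P. t B \<in> B)"

definition riemann_sum :: "('b set \<Rightarrow> real) \<Rightarrow> ('b \<Rightarrow> real) \<Rightarrow> 'b set set \<Rightarrow> ('b set \<Rightarrow> 'b) \<Rightarrow> real" where
  "riemann_sum \<mu> h P t = (\<Sum>B\<in>P. h (t B) * \<mu> B)"

definition common_refinement :: "'b set set \<Rightarrow> 'b set set \<Rightarrow> 'b set set" where
  "common_refinement P Q = {B \<inter> C | B C. B \<in> P \<and> C \<in> Q \<and> B \<inter> C \<noteq> {}}"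

lemma tagging_some: "is_partition S P \<Longrightarrow> tagging P (\<lambda>B. SOME x. x \<in> B)"
  unfolding tagging_def is_partition_def by (metis ex_in_conv someI_ex)

lemma partition_common_refinement:
  assumes P: "is_partition S P" and Q: "is_partition S Q"
  shows "is_partition S (common_refinement P Q)"
    and "refines (common_refinement P Q) P" "refines (common_refinement P Q) Q"
proof -
  have "common_refinement P Q \<subseteq> (\<lambda>(B, C). B \<inter> C) ` (P \<times> Q)"
    unfolding common_refinement_def by auto
  then have fin: "finite (common_refinement P Q)"
    using P Q unfolding is_partition_def by (meson finite_SigmaI finite_imageI finite_subset)
  have cover: "\<Union>(common_refinement P Q) = S"
  proof
    show "\<Union>(common_refinement P Q) \<subseteq> S"
      using P unfolding common_refinement_def is_partition_def by auto
    show "S \<subseteq> \<Union>(common_refinement P Q)"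
    proof
      fix x assume "x \<in> S"
      then have "x \<in> \<Union>P" "x \<in> \<Union>Q" using P Q unfolding is_partition_def by simp_all
      then obtain B C where "B \<in> P" "C \<in> Q" "x \<in> B" "x \<in> C" by (meson UnionE)
      then show "x \<in> \<Union>(common_refinement P Q)" unfolding common_refinement_def by blast
    qed
  qed
  have disj: "A \<inter> A' = {}"
    if mem: "A \<in> common_refinement P Q" "A' \<in> common_refinement P Q" and ne: "A \<noteq> A'" for A A'
  proof -
    obtain B C B' C' where A: "A = B \<inter> C" "B \<in> P" "C \<in> Q" and A': "A' = B' \<inter> C'" "B' \<in> P" "C' \<in> Q"
      using mem unfolding common_refinement_def by blast
    show ?thesis
    proof (cases "B = B'")
      case True
      then have "C \<noteq> C'" using A A' ne by auto
      then have "C \<inter> C' = {}" using Q A(3) A'(3) unfolding is_partition_def by auto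
      then show ?thesis using A A' by auto
    next
      case False
      then have "B \<inter> B' = {}" using P A(2) A'(2) unfolding is_partition_def by auto
      then show ?thesis using A A' by auto
    qed
  qed
  have "{} \<notin> common_refinement P Q" unfolding common_refinement_def by auto
  then show "is_partition S (common_refinement P Q)"
    unfolding is_partition_def using fin cover disj by blast
  show "refines (common_refinement P Q) P" "refines (common_refinement P Q) Q"
    unfolding refines_def common_refinement_def by auto
qed

lemma oscillation_le_refines:
  assumes "refines Q P" "oscillation_le h \<delta> P"
  shows "oscillation_le h \<delta> Q"
  unfolding oscillation_le_def
proof (intro ballI)
  fix B x y assume "B \<in> Q" "x \<in> B" "y \<in> B"
  then obtain C where "C \<in> P" "x \<in> C" "y \<in> C" using assms(1) unfolding refines_def by blast
  then show "\<bar>h x - h y\<bar> \<le> \<delta>" using assms(2) unfolding oscillation_le_def by blast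
qed

lemma fine_partition_exists:
  assumes "bounded (h ` S)" "\<delta> > 0"
  obtains P t where "is_partition S P" "oscillation_le h \<delta> P" "tagging P t"
proof -
  obtain K where K: "\<forall>z\<in>S. \<bar>h z\<bar> \<le> K" using assms(1) by (auto simp: bounded_real)
  define k where "k z = \<lfloor>h z / \<delta>\<rfloor>" for z
  define P where "P = (\<lambda>j. {z\<in>S. k z = j}) ` (k ` S)"
  have "k ` S \<subseteq> {\<lfloor>-K/\<delta>\<rfloor> .. \<lfloor>K/\<delta>\<rfloor>}"
  proof
    fix j assume "j \<in> k ` S"
    then obtain z where z: "z \<in> S" "j = k z" by auto
    have "-K \<le> h z" "h z \<le> K" using K z(1) by (auto simp: abs_le_iff)
    then have "(-K)/\<delta> \<le> h z/\<delta>" "h z/\<delta> \<le> K/\<delta>"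
      using assms(2) by (simp_all add: divide_right_mono le_divide_eq)
    then show "j \<in> {\<lfloor>-K/\<delta>\<rfloor> .. \<lfloor>K/\<delta>\<rfloor>}" unfolding z k_def by (auto intro: floor_mono)
  qed
  then have "finite P" unfolding P_def using finite_subset by blast
  then have P: "is_partition S P" unfolding is_partition_def P_def by auto
  moreover have "oscillation_le h \<delta> P"
    unfolding oscillation_le_def P_def
  proof clarsimp
    fix z x y assume "k x = k z" "k y = k z"
    then have "\<bar>h x/\<delta> - h y/\<delta>\<bar> < 1" unfolding k_def by linarith
    then show "\<bar>h x - h y\<bar> \<le> \<delta>"
      using assms(2) by (simp add: diff_divide_distrib[symmetric] abs_divide divide_less_eq)
  qed
  ultimately show thesis using that tagging_some[OF P] by blast
qed

section \<open>Integration against positive charges\<close>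

definition positive_charge :: "(('a \<times> 'a) set \<Rightarrow> real) \<Rightarrow> bool" where
  "positive_charge \<mu> \<longleftrightarrow>
     (\<forall>A B. A \<subseteq> offdiag \<and> B \<subseteq> offdiag \<and> A \<inter> B = {} \<longrightarrow> \<mu> (A \<union> B) = \<mu> A + \<mu> B) \<and>
     (\<forall>A. A \<subseteq> offdiag \<longrightarrow> 0 \<le> \<mu> A)"

lemma charge_Un:
  "positive_charge \<mu> \<Longrightarrow> A \<subseteq> offdiag \<Longrightarrow> B \<subseteq> offdiag \<Longrightarrow> A \<inter> B = {} \<Longrightarrow> \<mu> (A \<union> B) = \<mu> A + \<mu> B"
  unfolding positive_charge_def by blast

lemma charge_nonneg: "positive_charge \<mu> \<Longrightarrow> A \<subseteq> offdiag \<Longrightarrow> 0 \<le> \<mu> A"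
  unfolding positive_charge_def by blast

lemma charge_empty: "positive_charge \<mu> \<Longrightarrow> \<mu> {} = 0"
  using charge_Un[of \<mu> "{}" "{}"] by simp

lemma charge_Diff: "positive_charge \<mu> \<Longrightarrow> A \<subseteq> offdiag \<Longrightarrow> \<mu> (offdiag - A) = \<mu> offdiag - \<mu> A"
  using charge_Un[of \<mu> A "offdiag - A"] by (simp add: Un_absorb1)

lemma charge_Union:
  assumes "positive_charge \<mu>" "finite F" "\<forall>B\<in>F. B \<subseteq> offdiag"
    and "\<forall>A\<in>F. \<forall>B\<in>F. A \<noteq> B \<longrightarrow> A \<inter> B = {}"
  shows "\<mu> (\<Union>F) = (\<Sum>B\<in>F. \<mu> B)"
  using assms(2-4)
proof (induction F rule: finite_induct)
  case empty
  then show ?case using charge_empty[OF assms(1)] by simp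
next
  case (insert B F)
  have "\<forall>C\<in>F. B \<inter> C = {}" using insert.prems(2) insert.hyps(2) by (metis insertCI)
  then have "B \<inter> \<Union>F = {}" by (simp add: Int_Union)
  moreover have "B \<subseteq> offdiag" "\<Union>F \<subseteq> offdiag" using insert.prems(1) by auto
  ultimately have "\<mu> (B \<union> \<Union>F) = \<mu> B + \<mu> (\<Union>F)"
    using charge_Un[OF assms(1)] by simp
  then show ?case using insert by simp
qed

lemma charge_partition:
  assumes "positive_charge \<mu>" "is_partition offdiag P"
  shows "(\<Sum>B\<in>P. \<mu> B) = \<mu> offdiag"
proof -
  have "finite P" "\<Union>P = offdiag" "\<forall>B\<in>P. B \<subseteq> offdiag" "\<forall>A\<in>P. \<forall>B\<in>P. A \<noteq> B \<longrightarrow> A \<inter> B = {}"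
    using assms(2) unfolding is_partition_def by auto
  then show ?thesis using charge_Union[OF assms(1), of P] by simp
qed

lemma partition_two_blocks: "A \<subseteq> S \<Longrightarrow> is_partition S {B \<in> {A, S - A}. B \<noteq> {}}"
  unfolding is_partition_def by auto

lemma positive_charge_is_ba:
  assumes "positive_charge \<mu>"
  shows "is_ba \<mu>" "ba_norm \<mu> = \<mu> offdiag"
proof -
  have sums: "(\<Sum>B\<in>P. \<bar>\<mu> B\<bar>) = \<mu> offdiag" if P: "is_partition offdiag P" for P
  proof -
    have "B \<subseteq> offdiag" if "B \<in> P" for B using P that by (auto simp: is_partition_def)
    then have "(\<Sum>B\<in>P. \<bar>\<mu> B\<bar>) = (\<Sum>B\<in>P. \<mu> B)"
      by (intro sum.cong refl abs_of_nonneg charge_nonneg[OF assms])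
    then show ?thesis using charge_partition[OF assms P] by simp
  qed
  show "is_ba \<mu>"
    unfolding is_ba_def using assms sums unfolding positive_charge_def by auto
  obtain P0 :: "('a \<times> 'a) set set" where "is_partition offdiag P0"
    using partition_two_blocks[of offdiag offdiag] by blast
  then have "{(\<Sum>B\<in>P. \<bar>\<mu> B\<bar>) | P. is_partition offdiag P} = {\<mu> offdiag}"
    using sums by (auto intro!: exI[of _ P0])
  then show "ba_norm \<mu> = \<mu> offdiag" unfolding ba_norm_def by simp
qed

definition fine_tagged_partition ::
    "('a \<times> 'a \<Rightarrow> real) \<Rightarrow> real \<Rightarrow> ('a \<times> 'a) set set \<Rightarrow> (('a \<times> 'a) set \<Rightarrow> 'a \<times> 'a) \<Rightarrow> bool" where
  "fine_tagged_partition h \<delta> P t \<longleftrightarrow> is_partition offdiag P \<and> oscillation_le h \<delta> P \<and> tagging P t"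

definition has_ba_integral :: "(('a \<times> 'a) set \<Rightarrow> real) \<Rightarrow> ('a \<times> 'a \<Rightarrow> real) \<Rightarrow> real \<Rightarrow> bool" where
  "has_ba_integral \<mu> h I \<longleftrightarrow> (\<forall>\<epsilon>>0. \<exists>P. is_partition offdiag P \<and>
      (\<forall>Q t. is_partition offdiag Q \<and> refines Q P \<and> tagging Q t \<longrightarrow> \<bar>riemann_sum \<mu> h Q t - I\<bar> < \<epsilon>))"

lemma ba_integral_eq_The: "ba_integral \<mu> h = (THE I. has_ba_integral \<mu> h I)"
  unfolding ba_integral_def has_ba_integral_def tagging_def riemann_sum_def ..

lemma charge_refinement_fibre:
  assumes \<mu>: "positive_charge \<mu>" and P: "is_partition offdiag P" and Q: "is_partition offdiag Q"
    and \<pi>: "\<And>B'. B' \<in> Q \<Longrightarrow> \<pi> B' \<in> P \<and> B' \<subseteq> \<pi> B'" and B: "B \<in> P"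
  shows "(\<Sum>B'\<in>{B'\<in>Q. \<pi> B' = B}. \<mu> B') = \<mu> B"
proof -
  have "\<Union>{B'\<in>Q. \<pi> B' = B} = B"
  proof
    show "\<Union>{B'\<in>Q. \<pi> B' = B} \<subseteq> B" using \<pi> by blast
    show "B \<subseteq> \<Union>{B'\<in>Q. \<pi> B' = B}"
    proof
      fix x assume x: "x \<in> B"
      then have "x \<in> \<Union>Q" using P Q B by (auto simp: is_partition_def)
      then obtain B' where B': "B' \<in> Q" "x \<in> B'" by blast
      then have "x \<in> \<pi> B'" "\<pi> B' \<in> P" using \<pi> by auto
      then have "\<pi> B' = B" using P B x unfolding is_partition_def by blast
      then show "x \<in> \<Union>{B'\<in>Q. \<pi> B' = B}" using B' by blast
    qed
  qed
  moreover have "\<mu> (\<Union>{B'\<in>Q. \<pi> B' = B}) = (\<Sum>B'\<in>{B'\<in>Q. \<pi> B' = B}. \<mu> B')"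
    by (rule charge_Union[OF \<mu>]) (use Q in \<open>auto simp: is_partition_def\<close>)
  ultimately show ?thesis by simp
qed

lemma riemann_sum_refines:
  assumes \<mu>: "positive_charge \<mu>" and P: "fine_tagged_partition h \<delta> P t"
    and Q: "is_partition offdiag Q" "refines Q P" "tagging Q t'"
  shows "\<bar>riemann_sum \<mu> h Q t' - riemann_sum \<mu> h P t\<bar> \<le> \<delta> * \<mu> offdiag"
proof -
  define \<pi> where "\<pi> B' = (SOME B. B \<in> P \<and> B' \<subseteq> B)" for B'
  have \<pi>: "\<pi> B' \<in> P \<and> B' \<subseteq> \<pi> B'" if "B' \<in> Q" for B'
    unfolding \<pi>_def by (rule someI_ex) (use Q(2) that in \<open>auto simp: refines_def\<close>)
  have Pp: "is_partition offdiag P" using P by (simp add: fine_tagged_partition_def)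
  have "riemann_sum \<mu> h P t = (\<Sum>B\<in>P. \<Sum>B'\<in>{B'\<in>Q. \<pi> B' = B}. h (t (\<pi> B')) * \<mu> B')"
    unfolding riemann_sum_def
    by (rule sum.cong) (simp_all add: charge_refinement_fibre[OF \<mu> Pp Q(1) \<pi>] sum_distrib_left[symmetric])
  also have "\<dots> = (\<Sum>B'\<in>Q. h (t (\<pi> B')) * \<mu> B')"
    by (rule sum.group) (use Pp Q(1) \<pi> in \<open>auto simp: is_partition_def\<close>)
  finally have "riemann_sum \<mu> h Q t' - riemann_sum \<mu> h P t = (\<Sum>B'\<in>Q. (h (t' B') - h (t (\<pi> B'))) * \<mu> B')"
    unfolding riemann_sum_def by (simp add: sum_subtractf left_diff_distrib)
  also have "\<bar>\<dots>\<bar> \<le> (\<Sum>B'\<in>Q. \<delta> * \<mu> B')"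
  proof (rule order_trans[OF sum_abs sum_mono])
    fix B' assume B': "B' \<in> Q"
    have "t' B' \<in> \<pi> B'" "t (\<pi> B') \<in> \<pi> B'" "\<pi> B' \<in> P"
      using P Q(3) \<pi>[OF B'] B' by (auto simp: tagging_def fine_tagged_partition_def)
    then have "\<bar>h (t' B') - h (t (\<pi> B'))\<bar> \<le> \<delta>"
      using P by (auto simp: oscillation_le_def fine_tagged_partition_def)
    moreover have "0 \<le> \<mu> B'" using charge_nonneg[OF \<mu>] Q(1) B' by (auto simp: is_partition_def)
    ultimately show "\<bar>(h (t' B') - h (t (\<pi> B'))) * \<mu> B'\<bar> \<le> \<delta> * \<mu> B'"
      by (simp add: abs_mult mult_right_mono)
  qed
  also have "\<dots> = \<delta> * \<mu> offdiag"
    using charge_partition[OF \<mu> Q(1)] by (simp add: sum_distrib_left[symmetric])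
  finally show ?thesis .
qed

lemma riemann_sums_close:
  assumes \<mu>: "positive_charge \<mu>"
    and P: "fine_tagged_partition h \<delta> P t" and P': "fine_tagged_partition h \<delta>' P' t'"
  shows "\<bar>riemann_sum \<mu> h P t - riemann_sum \<mu> h P' t'\<bar> \<le> (\<delta> + \<delta>') * \<mu> offdiag"
proof -
  define Q where "Q = common_refinement P P'"
  have Q: "is_partition offdiag Q" "refines Q P" "refines Q P'"
    using partition_common_refinement P P' unfolding Q_def fine_tagged_partition_def by blast+
  define s where "s = (\<lambda>B. SOME x. x \<in> (B :: ('a \<times> 'a) set))"
  have s: "tagging Q s" unfolding s_def by (rule tagging_some[OF Q(1)])
  show ?thesis
    using riemann_sum_refines[OF \<mu> P Q(1,2) s] riemann_sum_refines[OF \<mu> P' Q(1,3) s]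
    by (simp add: distrib_right)
qed

lemma fine_tagged_partition_exists:
  assumes "bounded (h ` offdiag)" "\<delta> > 0"
  obtains P t where "fine_tagged_partition h \<delta> P t"
  using fine_partition_exists[OF assms] unfolding fine_tagged_partition_def by blast

lemma has_ba_integral_unique:
  assumes "has_ba_integral \<mu> h I" "has_ba_integral \<mu> h J"
  shows "I = J"
proof (rule ccontr)
  assume "I \<noteq> J"
  then have e: "\<bar>I - J\<bar> / 2 > 0" by simp
  obtain P1 where P1: "is_partition offdiag P1"
    "\<And>Q t. is_partition offdiag Q \<Longrightarrow> refines Q P1 \<Longrightarrow> tagging Q t \<Longrightarrow> \<bar>riemann_sum \<mu> h Q t - I\<bar> < \<bar>I - J\<bar> / 2"
    using assms(1) e unfolding has_ba_integral_def by meson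
  obtain P2 where P2: "is_partition offdiag P2"
    "\<And>Q t. is_partition offdiag Q \<Longrightarrow> refines Q P2 \<Longrightarrow> tagging Q t \<Longrightarrow> \<bar>riemann_sum \<mu> h Q t - J\<bar> < \<bar>I - J\<bar> / 2"
    using assms(2) e unfolding has_ba_integral_def by meson
  define Q where "Q = common_refinement P1 P2"
  have Q: "is_partition offdiag Q" "refines Q P1" "refines Q P2"
    using partition_common_refinement[OF P1(1) P2(1)] unfolding Q_def by blast+
  define s where "s = riemann_sum \<mu> h Q (\<lambda>B. SOME x. x \<in> B)"
  have "tagging Q (\<lambda>B. SOME x. x \<in> B)" by (rule tagging_some[OF Q(1)])
  then have "\<bar>s - I\<bar> < \<bar>I - J\<bar> / 2" "\<bar>s - J\<bar> < \<bar>I - J\<bar> / 2"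
    using P1(2)[OF Q(1,2)] P2(2)[OF Q(1,3)] unfolding s_def by blast+
  then show False using abs_triangle_ineq4[of "s - J" "s - I"] by simp
qed

lemma has_ba_integral_exists:
  assumes \<mu>: "positive_charge \<mu>" and h: "bounded (h ` offdiag)"
  obtains I where "has_ba_integral \<mu> h I"
    and "\<And>\<delta> P t. fine_tagged_partition h \<delta> P t \<Longrightarrow> \<bar>I - riemann_sum \<mu> h P t\<bar> \<le> \<delta> * \<mu> offdiag"
proof -
  define X where "X = {riemann_sum \<mu> h P t - \<delta> * \<mu> offdiag | \<delta> P t. fine_tagged_partition h \<delta> P t}"
  have ub: "x \<le> riemann_sum \<mu> h P t + \<delta> * \<mu> offdiag"
    if x: "x \<in> X" and P: "fine_tagged_partition h \<delta> P t" for x \<delta> P t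
  proof -
    obtain \<delta>' P' t' where x': "x = riemann_sum \<mu> h P' t' - \<delta>' * \<mu> offdiag" "fine_tagged_partition h \<delta>' P' t'"
      using x unfolding X_def by blast
    show ?thesis using riemann_sums_close[OF \<mu> x'(2) P] x'(1) by (simp add: abs_le_iff algebra_simps)
  qed
  obtain P0 t0 where P0: "fine_tagged_partition h 1 P0 t0"
    using fine_tagged_partition_exists[OF h, of 1] by auto
  then have Xne: "X \<noteq> {}" unfolding X_def by blast
  have Xbdd: "bdd_above X" using ub[OF _ P0] unfolding bdd_above_def by blast
  define I where "I = Sup X"
  have approx: "\<bar>I - riemann_sum \<mu> h P t\<bar> \<le> \<delta> * \<mu> offdiag" if P: "fine_tagged_partition h \<delta> P t" for \<delta> P t
  proof -
    have "I \<le> riemann_sum \<mu> h P t + \<delta> * \<mu> offdiag"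
      unfolding I_def by (rule cSup_least[OF Xne]) (use ub P in blast)
    moreover have "riemann_sum \<mu> h P t - \<delta> * \<mu> offdiag \<le> I"
      unfolding I_def by (rule cSup_upper[OF _ Xbdd]) (use P in \<open>auto simp: X_def\<close>)
    ultimately show ?thesis by linarith
  qed
  have "has_ba_integral \<mu> h I"
    unfolding has_ba_integral_def
  proof (intro allI impI)
    fix \<epsilon> :: real assume e: "\<epsilon> > 0"
    have m: "0 \<le> \<mu> offdiag" using charge_nonneg[OF \<mu>] by simp
    define \<delta> where "\<delta> = \<epsilon> / (\<mu> offdiag + 1)"
    have d: "\<delta> > 0" using e m unfolding \<delta>_def by auto
    have "\<delta> * \<mu> offdiag < \<delta> * (\<mu> offdiag + 1)" using d by simp
    then have dm: "\<delta> * \<mu> offdiag < \<epsilon>" unfolding \<delta>_def using m by simp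
    obtain P t where P: "fine_tagged_partition h \<delta> P t" using fine_tagged_partition_exists[OF h d] .
    show "\<exists>P. is_partition offdiag P \<and> (\<forall>Q t. is_partition offdiag Q \<and> refines Q P \<and> tagging Q t \<longrightarrow>
        \<bar>riemann_sum \<mu> h Q t - I\<bar> < \<epsilon>)"
    proof (intro exI conjI allI impI)
      show "is_partition offdiag P" using P by (simp add: fine_tagged_partition_def)
      fix Q t assume Q: "is_partition offdiag Q \<and> refines Q P \<and> tagging Q t"
      then have "fine_tagged_partition h \<delta> Q t"
        using P oscillation_le_refines unfolding fine_tagged_partition_def by blast
      then show "\<bar>riemann_sum \<mu> h Q t - I\<bar> < \<epsilon>" using approx[of \<delta> Q t] dm by (simp add: abs_minus_commute)
    qed
  qed
  then show thesis using that approx by blast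
qed

lemma ba_integral_approx:
  assumes "positive_charge \<mu>" "bounded (h ` offdiag)" "fine_tagged_partition h \<delta> P t"
  shows "\<bar>ba_integral \<mu> h - riemann_sum \<mu> h P t\<bar> \<le> \<delta> * \<mu> offdiag"
proof -
  obtain I where I: "has_ba_integral \<mu> h I"
    and approx: "\<And>\<delta> P t. fine_tagged_partition h \<delta> P t \<Longrightarrow> \<bar>I - riemann_sum \<mu> h P t\<bar> \<le> \<delta> * \<mu> offdiag"
    using has_ba_integral_exists[OF assms(1,2)] by blast
  have "ba_integral \<mu> h = I"
    unfolding ba_integral_eq_The using I has_ba_integral_unique by blast
  then show ?thesis using approx[OF assms(3)] by simp
qed

lemma le_0_if_le_pos_mult:
  fixes a c :: real
  assumes "\<And>\<delta>. \<delta> > 0 \<Longrightarrow> a \<le> \<delta> * c"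
  shows "a \<le> 0"
proof (rule field_le_epsilon)
  fix e :: real assume "e > 0"
  then have "e / (\<bar>c\<bar> + 1) > 0" by simp
  then have "a \<le> e / (\<bar>c\<bar> + 1) * c" by (rule assms)
  also have "\<dots> \<le> e / (\<bar>c\<bar> + 1) * (\<bar>c\<bar> + 1)" using \<open>e > 0\<close> by (intro mult_left_mono) auto
  finally show "a \<le> 0 + e" by simp
qed

lemma ba_integral_eqI:
  assumes \<mu>: "positive_charge \<mu>" and h: "bounded (h ` offdiag)"
    and approx: "\<And>\<delta>. \<delta> > 0 \<Longrightarrow> \<exists>P t. fine_tagged_partition h \<delta> P t \<and> \<bar>riemann_sum \<mu> h P t - J\<bar> \<le> C * \<delta>"
  shows "ba_integral \<mu> h = J"
proof -
  have "\<bar>ba_integral \<mu> h - J\<bar> \<le> \<delta> * (\<mu> offdiag + C)" if d: "\<delta> > 0" for \<delta>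
  proof -
    obtain P t where P: "fine_tagged_partition h \<delta> P t" "\<bar>riemann_sum \<mu> h P t - J\<bar> \<le> C * \<delta>"
      using approx[OF d] by blast
    then show ?thesis using ba_integral_approx[OF \<mu> h P(1)] by (simp add: algebra_simps)
  qed
  then have "\<bar>ba_integral \<mu> h - J\<bar> \<le> 0" by (intro le_0_if_le_pos_mult)
  then show ?thesis by simp
qed

lemma bounded_cmult_comp:
  fixes h :: "'b \<Rightarrow> real"
  shows "bounded (h ` S) \<Longrightarrow> bounded ((\<lambda>z. c * h z) ` S)"
  using bounded_scaleR_comp[of h S c] by simp

lemma bounded_indicator: "bounded ((indicator A :: 'b \<Rightarrow> real) ` S)"
  unfolding bounded_real by (intro exI[of _ 1]) (auto simp: indicator_def)

lemma bounded_sum_comp: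
  fixes f :: "'i \<Rightarrow> 'b \<Rightarrow> real"
  assumes "finite F" "\<And>i. i \<in> F \<Longrightarrow> bounded (f i ` S)"
  shows "bounded ((\<lambda>z. \<Sum>i\<in>F. f i z) ` S)"
  using assms
proof (induction F rule: finite_induct)
  case empty
  then show ?case unfolding bounded_real by (intro exI[of _ 0]) auto
next
  case (insert i F)
  then show ?case using bounded_plus_comp[of "f i" S "\<lambda>z. \<Sum>i\<in>F. f i z"] by simp
qed

lemma riemann_sum_add: "riemann_sum \<mu> (\<lambda>z. h z + g z) P t = riemann_sum \<mu> h P t + riemann_sum \<mu> g P t"
  unfolding riemann_sum_def by (simp add: sum.distrib distrib_right)

lemma riemann_sum_cmult: "riemann_sum \<mu> (\<lambda>z. c * h z) P t = c * riemann_sum \<mu> h P t"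
  unfolding riemann_sum_def by (simp add: sum_distrib_left mult.assoc)

lemma riemann_sum_abs_le:
  assumes \<mu>: "positive_charge \<mu>" and P: "is_partition offdiag P" "tagging P t"
    and h: "\<And>z. z \<in> offdiag \<Longrightarrow> \<bar>h z\<bar> \<le> K"
  shows "\<bar>riemann_sum \<mu> h P t\<bar> \<le> K * \<mu> offdiag"
proof -
  have "\<bar>riemann_sum \<mu> h P t\<bar> \<le> (\<Sum>B\<in>P. \<bar>h (t B) * \<mu> B\<bar>)"
    unfolding riemann_sum_def by (rule sum_abs)
  also have "\<dots> \<le> (\<Sum>B\<in>P. K * \<mu> B)"
  proof (rule sum_mono)
    fix B assume "B \<in> P"
    then have "B \<subseteq> offdiag" "t B \<in> B" using P by (auto simp: is_partition_def tagging_def)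
    then show "\<bar>h (t B) * \<mu> B\<bar> \<le> K * \<mu> B"
      using h[of "t B"] charge_nonneg[OF \<mu>, of B] by (auto simp: abs_mult intro: mult_right_mono)
  qed
  also have "\<dots> = K * \<mu> offdiag"
    using charge_partition[OF \<mu> P(1)] by (simp add: sum_distrib_left[symmetric])
  finally show ?thesis .
qed

lemma oscillation_le_add:
  "oscillation_le h \<delta> P \<Longrightarrow> oscillation_le g \<delta>' P \<Longrightarrow> oscillation_le (\<lambda>z. h z + g z) (\<delta> + \<delta>') P"
  unfolding oscillation_le_def by (smt (verit, best))

lemma oscillation_le_cmult: "oscillation_le h \<delta> P \<Longrightarrow> oscillation_le (\<lambda>z. c * h z) (\<bar>c\<bar> * \<delta>) P"
  unfolding oscillation_le_def
  by (metis abs_ge_zero abs_mult mult_left_mono right_diff_distrib)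

lemma fine_tagged_partition_common:
  assumes "bounded (h ` offdiag)" "bounded (g ` offdiag)" "\<delta> > 0"
  obtains P t where "fine_tagged_partition h \<delta> P t" "fine_tagged_partition g \<delta> P t"
proof -
  obtain P1 t1 where P1: "fine_tagged_partition h \<delta> P1 t1"
    using fine_tagged_partition_exists[OF assms(1,3)] .
  obtain P2 t2 where P2: "fine_tagged_partition g \<delta> P2 t2"
    using fine_tagged_partition_exists[OF assms(2,3)] .
  define Q where "Q = common_refinement P1 P2"
  have Q: "is_partition offdiag Q" "refines Q P1" "refines Q P2"
    using partition_common_refinement P1 P2 unfolding Q_def fine_tagged_partition_def by blast+
  then show thesis
    using that[of Q] tagging_some[OF Q(1)] P1 P2 oscillation_le_refines
    unfolding fine_tagged_partition_def by blast
qed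

lemma ba_integral_add:
  assumes \<mu>: "positive_charge \<mu>" and h: "bounded (h ` offdiag)" and g: "bounded (g ` offdiag)"
  shows "ba_integral \<mu> (\<lambda>z. h z + g z) = ba_integral \<mu> h + ba_integral \<mu> g"
proof (rule ba_integral_eqI[OF \<mu> bounded_plus_comp[OF h g]])
  fix \<delta> :: real assume "\<delta> > 0"
  then obtain P t where P: "fine_tagged_partition h (\<delta>/2) P t" "fine_tagged_partition g (\<delta>/2) P t"
    using fine_tagged_partition_common[OF h g, of "\<delta>/2"] by auto
  then have "fine_tagged_partition (\<lambda>z. h z + g z) \<delta> P t"
    using oscillation_le_add[of h "\<delta>/2" P g "\<delta>/2"] by (simp add: fine_tagged_partition_def)
  moreover have "\<bar>riemann_sum \<mu> (\<lambda>z. h z + g z) P t - (ba_integral \<mu> h + ba_integral \<mu> g)\<bar> \<le> \<mu> offdiag * \<delta>"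
  proof -
    have "\<delta> / 2 * \<mu> offdiag = \<delta> * \<mu> offdiag / 2" "\<mu> offdiag * \<delta> = \<delta> * \<mu> offdiag" by simp_all
    then show ?thesis
      using ba_integral_approx[OF \<mu> h P(1)] ba_integral_approx[OF \<mu> g P(2)]
      unfolding riemann_sum_add abs_le_iff by linarith
  qed
  ultimately show "\<exists>P t. fine_tagged_partition (\<lambda>z. h z + g z) \<delta> P t \<and>
      \<bar>riemann_sum \<mu> (\<lambda>z. h z + g z) P t - (ba_integral \<mu> h + ba_integral \<mu> g)\<bar> \<le> \<mu> offdiag * \<delta>"
    by blast
qed

lemma ba_integral_cmult:
  assumes \<mu>: "positive_charge \<mu>" and h: "bounded (h ` offdiag)"
  shows "ba_integral \<mu> (\<lambda>z. c * h z) = c * ba_integral \<mu> h"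
proof (rule ba_integral_eqI[OF \<mu> bounded_cmult_comp[OF h]])
  fix \<delta> :: real assume d: "\<delta> > 0"
  define \<eta> where "\<eta> = \<delta> / (\<bar>c\<bar> + 1)"
  have e: "\<eta> > 0" using d unfolding \<eta>_def by (simp add: add_pos_nonneg)
  have "\<bar>c\<bar> * \<eta> \<le> (\<bar>c\<bar> + 1) * \<eta>" using e by simp
  then have ce: "\<bar>c\<bar> * \<eta> \<le> \<delta>" unfolding \<eta>_def by (simp add: add_pos_nonneg)
  obtain P t where P: "fine_tagged_partition h \<eta> P t" using fine_tagged_partition_exists[OF h e] .
  have "oscillation_le (\<lambda>z. c * h z) \<delta> P"
    using oscillation_le_cmult[of h \<eta> P c] ce P unfolding oscillation_le_def fine_tagged_partition_def
    by fastforce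
  then have "fine_tagged_partition (\<lambda>z. c * h z) \<delta> P t" using P by (simp add: fine_tagged_partition_def)
  moreover have "\<bar>riemann_sum \<mu> (\<lambda>z. c * h z) P t - c * ba_integral \<mu> h\<bar> \<le> \<mu> offdiag * \<delta>"
  proof -
    have "\<bar>riemann_sum \<mu> (\<lambda>z. c * h z) P t - c * ba_integral \<mu> h\<bar>
        = \<bar>c\<bar> * \<bar>ba_integral \<mu> h - riemann_sum \<mu> h P t\<bar>"
      unfolding riemann_sum_cmult by (simp add: abs_mult[symmetric] algebra_simps)
    also have "\<dots> \<le> \<bar>c\<bar> * (\<eta> * \<mu> offdiag)"
      using ba_integral_approx[OF \<mu> h P] by (intro mult_left_mono) auto
    also have "\<dots> \<le> \<delta> * \<mu> offdiag"
      using ce charge_nonneg[OF \<mu>, of offdiag] by (simp add: mult.assoc[symmetric] mult_right_mono)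
    finally show ?thesis by (simp add: mult.commute)
  qed
  ultimately show "\<exists>P t. fine_tagged_partition (\<lambda>z. c * h z) \<delta> P t \<and>
      \<bar>riemann_sum \<mu> (\<lambda>z. c * h z) P t - c * ba_integral \<mu> h\<bar> \<le> \<mu> offdiag * \<delta>"
    by blast
qed

lemma ba_integral_abs_le:
  assumes \<mu>: "positive_charge \<mu>" and h: "bounded (h ` offdiag)"
    and K: "\<And>z. z \<in> offdiag \<Longrightarrow> \<bar>h z\<bar> \<le> K"
  shows "\<bar>ba_integral \<mu> h\<bar> \<le> K * \<mu> offdiag"
proof -
  have "\<bar>ba_integral \<mu> h\<bar> - K * \<mu> offdiag \<le> \<delta> * \<mu> offdiag" if d: "\<delta> > 0" for \<delta>
  proof -
    obtain P t where P: "fine_tagged_partition h \<delta> P t" using fine_tagged_partition_exists[OF h d] .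
    then have "\<bar>riemann_sum \<mu> h P t\<bar> \<le> K * \<mu> offdiag"
      using riemann_sum_abs_le[OF \<mu> _ _ K] by (simp add: fine_tagged_partition_def)
    then show ?thesis using ba_integral_approx[OF \<mu> h P] by linarith
  qed
  then have "\<bar>ba_integral \<mu> h\<bar> - K * \<mu> offdiag \<le> 0" by (rule le_0_if_le_pos_mult)
  then show ?thesis by simp
qed

lemma ba_integral_nonneg:
  assumes \<mu>: "positive_charge \<mu>" and h: "bounded (h ` offdiag)" and nonneg: "\<And>z. z \<in> offdiag \<Longrightarrow> 0 \<le> h z"
  shows "0 \<le> ba_integral \<mu> h"
proof -
  have "- ba_integral \<mu> h \<le> \<delta> * \<mu> offdiag" if d: "\<delta> > 0" for \<delta>
  proof -
    obtain P t where P: "fine_tagged_partition h \<delta> P t" using fine_tagged_partition_exists[OF h d] .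
    have "0 \<le> riemann_sum \<mu> h P t"
      unfolding riemann_sum_def
    proof (rule sum_nonneg)
      fix B assume "B \<in> P"
      then have "B \<subseteq> offdiag" "t B \<in> B" using P by (auto simp: fine_tagged_partition_def is_partition_def tagging_def)
      then show "0 \<le> h (t B) * \<mu> B" using nonneg[of "t B"] charge_nonneg[OF \<mu>, of B] by auto
    qed
    then show ?thesis using ba_integral_approx[OF \<mu> h P] by linarith
  qed
  then have "- ba_integral \<mu> h \<le> 0" by (rule le_0_if_le_pos_mult)
  then show ?thesis by simp
qed

lemma ba_integral_mono:
  assumes \<mu>: "positive_charge \<mu>" and h: "bounded (h ` offdiag)" and g: "bounded (g ` offdiag)"
    and le: "\<And>z. z \<in> offdiag \<Longrightarrow> h z \<le> g z"
  shows "ba_integral \<mu> h \<le> ba_integral \<mu> g"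
proof -
  have "ba_integral \<mu> (\<lambda>z. g z + (-1) * h z) = ba_integral \<mu> g - ba_integral \<mu> h"
    using ba_integral_add[OF \<mu> g bounded_cmult_comp[OF h, of "-1"]] ba_integral_cmult[OF \<mu> h, of "-1"]
    by simp
  moreover have "0 \<le> ba_integral \<mu> (\<lambda>z. g z + (-1) * h z)"
    using le by (intro ba_integral_nonneg[OF \<mu> bounded_plus_comp[OF g bounded_cmult_comp[OF h]]]) auto
  ultimately show ?thesis by simp
qed

lemma ba_integral_indicator:
  assumes \<mu>: "positive_charge \<mu>" and A: "A \<subseteq> offdiag"
  shows "ba_integral \<mu> (indicator A) = \<mu> A"
proof (rule ba_integral_eqI[OF \<mu> bounded_indicator, where C = 0])
  fix \<delta> :: real assume d: "\<delta> > 0"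
  define P where "P = {B \<in> {A, offdiag - A}. B \<noteq> {}}"
  have P: "is_partition offdiag P" unfolding P_def by (rule partition_two_blocks[OF A])
  define t where "t = (\<lambda>B. SOME x. x \<in> (B :: ('a \<times> 'a) set))"
  have t: "tagging P t" unfolding t_def by (rule tagging_some[OF P])
  have "oscillation_le (indicator A) \<delta> P"
    unfolding oscillation_le_def P_def using d by (auto simp: indicator_def)
  moreover have "riemann_sum \<mu> (indicator A) P t = \<mu> A"
  proof (cases "A = {}")
    case True
    then have "riemann_sum \<mu> (indicator A) P t = 0" unfolding riemann_sum_def by simp
    then show ?thesis using True charge_empty[OF \<mu>] by simp
  next
    case False
    have "riemann_sum \<mu> (indicator A) P t = (\<Sum>B\<in>P. if B = A then \<mu> A else 0)"
      unfolding riemann_sum_def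
    proof (rule sum.cong)
      fix B assume B: "B \<in> P"
      then have "t B \<in> B" using t by (simp add: tagging_def)
      moreover have "B = A \<or> B = offdiag - A" using B by (auto simp: P_def)
      ultimately show "indicator A (t B) * \<mu> B = (if B = A then \<mu> A else 0)" by auto
    qed simp
    also have "\<dots> = \<mu> A" using False P by (simp add: P_def is_partition_def)
    finally show ?thesis .
  qed
  ultimately show "\<exists>P t. fine_tagged_partition (indicator A) \<delta> P t \<and> \<bar>riemann_sum \<mu> (indicator A) P t - \<mu> A\<bar> \<le> 0 * \<delta>"
    using P t unfolding fine_tagged_partition_def by auto
qed

lemma ba_integral_two_step:
  assumes \<mu>: "positive_charge \<mu>" and A: "A \<subseteq> offdiag"
  shows "ba_integral \<mu> (\<lambda>z. a * indicator A z + b * indicator (offdiag - A) z) = a * \<mu> A + b * (\<mu> offdiag - \<mu> A)"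
  using ba_integral_add[OF \<mu> bounded_cmult_comp[OF bounded_indicator] bounded_cmult_comp[OF bounded_indicator]]
    ba_integral_cmult[OF \<mu> bounded_indicator] ba_integral_indicator[OF \<mu>] A charge_Diff[OF \<mu> A]
  by simp

lemma Phi_star_add:
  "positive_charge \<mu> \<Longrightarrow> f \<in> Lip0 z0 \<Longrightarrow> g \<in> Lip0 z0 \<Longrightarrow> Phi_star \<mu> (\<lambda>x. f x + g x) = Phi_star \<mu> f + Phi_star \<mu> g"
  unfolding Phi_star_slope slope_add by (auto simp: Lip0_iff_lipschitz intro!: ba_integral_add bounded_slope)

lemma Phi_star_cmult:
  "positive_charge \<mu> \<Longrightarrow> f \<in> Lip0 z0 \<Longrightarrow> Phi_star \<mu> (\<lambda>x. c * f x) = c * Phi_star \<mu> f"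
  unfolding Phi_star_slope slope_cmult by (auto simp: Lip0_iff_lipschitz intro!: ba_integral_cmult bounded_slope)

lemma Phi_star_abs_le:
  assumes "positive_charge \<mu>" "f \<in> Lip0 z0"
  shows "\<bar>Phi_star \<mu> f\<bar> \<le> \<mu> offdiag * lipnorm f"
proof -
  obtain C where "C-lipschitz_on UNIV f" using assms(2) by (auto simp: Lip0_iff_lipschitz)
  then show ?thesis
    unfolding Phi_star_slope using ba_integral_abs_le[OF assms(1) bounded_slope abs_slope_le_lipnorm]
    by (simp add: mult.commute)
qed

lemma Phi_star_lip0_functional: "positive_charge \<mu> \<Longrightarrow> is_lip0_functional z0 (Phi_star \<mu>)"
  unfolding is_lip0_functional_def using Phi_star_add Phi_star_cmult Phi_star_abs_le by blast

section \<open>The Hahn--Banach theorem for spaces of real functions\<close>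

locale sublinear_on =
  fixes E :: "('b \<Rightarrow> real) set" and p :: "('b \<Rightarrow> real) \<Rightarrow> real"
  assumes add_closed: "g \<in> E \<Longrightarrow> h \<in> E \<Longrightarrow> (\<lambda>x. g x + h x) \<in> E"
    and cmult_closed: "g \<in> E \<Longrightarrow> (\<lambda>x. c * g x) \<in> E"
    and subadditive: "g \<in> E \<Longrightarrow> h \<in> E \<Longrightarrow> p (\<lambda>x. g x + h x) \<le> p g + p h"
    and pos_homogeneous: "c > 0 \<Longrightarrow> g \<in> E \<Longrightarrow> p (\<lambda>x. c * g x) = c * p g"
begin

definition dominated_graph :: "(('b \<Rightarrow> real) \<times> real) set \<Rightarrow> bool" where
  "dominated_graph G \<longleftrightarrow> G \<noteq> {} \<and>
     (\<forall>g a b. (g, a) \<in> G \<longrightarrow> (g, b) \<in> G \<longrightarrow> a = b) \<and>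
     (\<forall>g a h b. (g, a) \<in> G \<longrightarrow> (h, b) \<in> G \<longrightarrow> ((\<lambda>x. g x + h x), a + b) \<in> G) \<and>
     (\<forall>c g a. (g, a) \<in> G \<longrightarrow> ((\<lambda>x. c * g x), c * a) \<in> G) \<and>
     (\<forall>g a. (g, a) \<in> G \<longrightarrow> g \<in> E \<and> a \<le> p g)"

lemma dominated_graphD:
  assumes "dominated_graph G"
  shows "(g, a) \<in> G \<Longrightarrow> (g, b) \<in> G \<Longrightarrow> a = b"
    and "(g, a) \<in> G \<Longrightarrow> (h, b) \<in> G \<Longrightarrow> ((\<lambda>x. g x + h x), a + b) \<in> G"
    and "(g, a) \<in> G \<Longrightarrow> ((\<lambda>x. c * g x), c * a) \<in> G"
    and "(g, a) \<in> G \<Longrightarrow> g \<in> E" "(g, a) \<in> G \<Longrightarrow> a \<le> p g"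
  using assms unfolding dominated_graph_def by blast+

lemma dominated_graph_zero: "dominated_graph G \<Longrightarrow> ((\<lambda>x. 0), 0) \<in> G"
  using dominated_graphD(3)[of G _ _ 0] by (force simp: dominated_graph_def)

lemma extension_constant_exists:
  assumes M: "dominated_graph M" and x0: "x0 \<in> E"
  obtains c where "\<And>h b. (h, b) \<in> M \<Longrightarrow> c \<le> p (\<lambda>x. h x + x0 x) - b"
    and "\<And>g a. (g, a) \<in> M \<Longrightarrow> a - p (\<lambda>x. g x + (-1) * x0 x) \<le> c"
proof -
  define L where "L = {a - p (\<lambda>x. g x + (-1) * x0 x) | g a. (g, a) \<in> M}"
  have bound: "a - p (\<lambda>x. g x + (-1) * x0 x) \<le> p (\<lambda>x. h x + x0 x) - b"
    if ga: "(g, a) \<in> M" and hb: "(h, b) \<in> M" for g a h b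
  proof -
    have E: "g \<in> E" "h \<in> E" using dominated_graphD(4)[OF M] ga hb by auto
    have "a + b \<le> p (\<lambda>x. g x + h x)" by (rule dominated_graphD(5)[OF M dominated_graphD(2)[OF M ga hb]])
    also have "(\<lambda>x. g x + h x) = (\<lambda>x. (g x + (-1) * x0 x) + (h x + x0 x))" by auto
    also have "p \<dots> \<le> p (\<lambda>x. g x + (-1) * x0 x) + p (\<lambda>x. h x + x0 x)"
      by (intro subadditive add_closed cmult_closed E x0)
    finally show ?thesis by simp
  qed
  have Lne: "L \<noteq> {}" using dominated_graph_zero[OF M] unfolding L_def by blast
  have Lbdd: "bdd_above L" using bound[OF _ dominated_graph_zero[OF M]] unfolding L_def bdd_above_def by blast
  show thesis
  proof (rule that)
    show "Sup L \<le> p (\<lambda>x. h x + x0 x) - b" if "(h, b) \<in> M" for h b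
      by (rule cSup_least[OF Lne]) (use bound that in \<open>auto simp: L_def\<close>)
    show "a - p (\<lambda>x. g x + (-1) * x0 x) \<le> Sup L" if "(g, a) \<in> M" for g a
      by (rule cSup_upper[OF _ Lbdd]) (use that in \<open>auto simp: L_def\<close>)
  qed
qed

text \<open>The one-dimensional extension step: \<open>c\<close> is squeezed between the bounds forced by
  \<open>p\<close> on \<open>g + x0\<close> and \<open>g - x0\<close>, and positive homogeneity rescales every \<open>t\<close> to \<open>\<plusminus>1\<close>.\<close>
lemma extension_dominated:
  assumes M: "dominated_graph M" and x0: "x0 \<in> E" and ga: "(g, a) \<in> M"
    and c_le: "\<And>h b. (h, b) \<in> M \<Longrightarrow> c \<le> p (\<lambda>x. h x + x0 x) - b"
    and c_ge: "\<And>g a. (g, a) \<in> M \<Longrightarrow> a - p (\<lambda>x. g x + (-1) * x0 x) \<le> c"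
  shows "a + t * c \<le> p (\<lambda>x. g x + t * x0 x)"
proof -
  have gE: "g \<in> E" using dominated_graphD(4)[OF M ga] .
  consider "t > 0" | "t < 0" | "t = 0" by linarith
  then show ?thesis
  proof cases
    case 1
    have "c \<le> p (\<lambda>x. (1/t) * g x + x0 x) - (1/t) * a"
      using c_le[OF dominated_graphD(3)[OF M ga]] .
    then have "t * c \<le> t * (p (\<lambda>x. (1/t) * g x + x0 x) - (1/t) * a)"
      using 1 by (intro mult_left_mono) auto
    also have "\<dots> = t * p (\<lambda>x. (1/t) * g x + x0 x) - a"
      using 1 by (simp add: right_diff_distrib)
    also have "t * p (\<lambda>x. (1/t) * g x + x0 x) = p (\<lambda>x. t * ((1/t) * g x + x0 x))"
      using 1 by (intro pos_homogeneous[symmetric] add_closed cmult_closed gE x0)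
    also have "(\<lambda>x. t * ((1/t) * g x + x0 x)) = (\<lambda>x. g x + t * x0 x)"
      using 1 by (auto simp: algebra_simps)
    finally show ?thesis by simp
  next
    case 2
    define s where "s = -t"
    have s: "s > 0" using 2 unfolding s_def by simp
    have "(1/s) * a - p (\<lambda>x. (1/s) * g x + (-1) * x0 x) \<le> c"
      using c_ge[OF dominated_graphD(3)[OF M ga]] .
    then have "s * ((1/s) * a - p (\<lambda>x. (1/s) * g x + (-1) * x0 x)) \<le> s * c"
      using s by (intro mult_left_mono) auto
    then have "a - s * p (\<lambda>x. (1/s) * g x + (-1) * x0 x) \<le> s * c"
      using s by (simp add: right_diff_distrib)
    also have "s * p (\<lambda>x. (1/s) * g x + (-1) * x0 x) = p (\<lambda>x. s * ((1/s) * g x + (-1) * x0 x))"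
      using s by (intro pos_homogeneous[symmetric] add_closed cmult_closed gE x0)
    also have "(\<lambda>x. s * ((1/s) * g x + (-1) * x0 x)) = (\<lambda>x. g x + t * x0 x)"
      using s unfolding s_def by (auto simp: algebra_simps)
    finally show ?thesis unfolding s_def by simp
  next
    case 3
    then show ?thesis using dominated_graphD(5)[OF M ga] by simp
  qed
qed

text \<open>Adjoining \<open>x0 \<notin> dom M\<close> with value \<open>c\<close> is well defined: \<open>g + t x0 = g' + t' x0\<close> with \<open>t \<noteq> t'\<close>
  would put \<open>x0\<close> into the domain of \<open>M\<close>.\<close>
lemma extension_unique:
  assumes M: "dominated_graph M" and x0: "\<And>a. (x0, a) \<notin> M"
    and ga: "(g, a) \<in> M" and ga': "(g', a') \<in> M" and eq: "(\<lambda>x. g x + t * x0 x) = (\<lambda>x. g' x + t' * x0 x)"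
  shows "a + t * c = a' + t' * c"
proof (cases "t = t'")
  case True
  have "g = g'"
  proof
    fix x show "g x = g' x" using fun_cong[OF eq, of x] True by simp
  qed
  then show ?thesis using dominated_graphD(1)[OF M ga] ga' True by blast
next
  case False
  have "(\<lambda>x. (1/(t'-t)) * (g x + (-1) * g' x)) = x0"
  proof
    fix x
    have "g x + (-1) * g' x = (t' - t) * x0 x" using fun_cong[OF eq, of x] by (simp add: algebra_simps)
    then show "(1/(t'-t)) * (g x + (-1) * g' x) = x0 x" using False by simp
  qed
  moreover have "((\<lambda>x. (1/(t'-t)) * (g x + (-1) * g' x)), (1/(t'-t)) * (a + (-1) * a')) \<in> M"
    by (intro dominated_graphD(2,3)[OF M] ga ga')
  ultimately show ?thesis using x0 by simp
qed

lemma dominated_graph_extend: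
  assumes M: "dominated_graph M" and x0: "x0 \<in> E" "\<And>a. (x0, a) \<notin> M"
  obtains M' where "dominated_graph M'" "M \<subset> M'"
proof -
  obtain c where c_le: "\<And>h b. (h, b) \<in> M \<Longrightarrow> c \<le> p (\<lambda>x. h x + x0 x) - b"
    and c_ge: "\<And>g a. (g, a) \<in> M \<Longrightarrow> a - p (\<lambda>x. g x + (-1) * x0 x) \<le> c"
    using extension_constant_exists[OF M x0(1)] by blast
  define M' where "M' = {((\<lambda>x. g x + t * x0 x), a + t * c) | g a t. (g, a) \<in> M}"
  have inM': "((\<lambda>x. g x + t * x0 x), a + t * c) \<in> M'" if "(g, a) \<in> M" for g a t
    unfolding M'_def using that by blast
  have "dominated_graph M'"
    unfolding dominated_graph_def
  proof (intro conjI allI impI)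
    show "M' \<noteq> {}" using inM'[OF dominated_graph_zero[OF M]] by blast
  next
    fix g a b assume "(g, a) \<in> M'" "(g, b) \<in> M'"
    then show "a = b" unfolding M'_def using extension_unique[OF M x0(2)] by blast
  next
    fix g a h b assume "(g, a) \<in> M'" "(h, b) \<in> M'"
    then obtain g1 a1 t1 g2 a2 t2 where m: "(g1, a1) \<in> M" "(g2, a2) \<in> M"
      "g = (\<lambda>x. g1 x + t1 * x0 x)" "a = a1 + t1 * c" "h = (\<lambda>x. g2 x + t2 * x0 x)" "b = a2 + t2 * c"
      unfolding M'_def by blast
    have "((\<lambda>x. (g1 x + g2 x) + (t1 + t2) * x0 x), (a1 + a2) + (t1 + t2) * c) \<in> M'"
      by (intro inM' dominated_graphD(2)[OF M m(1,2)])
    then show "((\<lambda>x. g x + h x), a + b) \<in> M'" using m by (simp add: algebra_simps)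
  next
    fix c' g a assume "(g, a) \<in> M'"
    then obtain g1 a1 t1 where m: "(g1, a1) \<in> M" "g = (\<lambda>x. g1 x + t1 * x0 x)" "a = a1 + t1 * c"
      unfolding M'_def by blast
    have "((\<lambda>x. c' * g1 x + (c' * t1) * x0 x), c' * a1 + (c' * t1) * c) \<in> M'"
      by (intro inM' dominated_graphD(3)[OF M m(1)])
    then show "((\<lambda>x. c' * g x), c' * a) \<in> M'" using m by (simp add: algebra_simps)
  next
    fix g a assume "(g, a) \<in> M'"
    then obtain g1 a1 t1 where m: "(g1, a1) \<in> M" "g = (\<lambda>x. g1 x + t1 * x0 x)" "a = a1 + t1 * c"
      unfolding M'_def by blast
    show "g \<in> E" unfolding m(2) by (intro add_closed cmult_closed x0(1) dominated_graphD(4)[OF M m(1)])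
    show "a \<le> p g" unfolding m(2,3) by (rule extension_dominated[OF M x0(1) m(1) c_le c_ge])
  qed
  moreover have "M \<subseteq> M'" using inM'[of _ _ 0] by auto
  moreover have "(x0, c) \<in> M'" using inM'[OF dominated_graph_zero[OF M], of 1] by simp
  ultimately show thesis using that x0(2) by blast
qed

lemma dominated_graph_chain_Union:
  assumes ne: "C \<noteq> {}" and dg: "\<And>X. X \<in> C \<Longrightarrow> dominated_graph X"
    and chain: "\<And>X Y. X \<in> C \<Longrightarrow> Y \<in> C \<Longrightarrow> X \<subseteq> Y \<or> Y \<subseteq> X"
  shows "dominated_graph (\<Union>C)"
proof -
  have common: "\<exists>X\<in>C. u \<in> X \<and> v \<in> X" if uv: "u \<in> \<Union>C" "v \<in> \<Union>C" for u v
  proof -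
    obtain X Y where "X \<in> C" "Y \<in> C" "u \<in> X" "v \<in> Y" using uv by blast
    then show ?thesis using chain[of X Y] by blast
  qed
  show ?thesis
    unfolding dominated_graph_def
  proof (intro conjI allI impI)
    obtain X where "X \<in> C" using ne by blast
    then show "\<Union>C \<noteq> {}" using dg[of X] by (auto simp: dominated_graph_def)
  next
    fix g a b assume "(g, a) \<in> \<Union>C" "(g, b) \<in> \<Union>C"
    then obtain X where "X \<in> C" "(g, a) \<in> X" "(g, b) \<in> X" using common by blast
    then show "a = b" using dominated_graphD(1)[OF dg] by blast
  next
    fix g a h b assume "(g, a) \<in> \<Union>C" "(h, b) \<in> \<Union>C"
    then obtain X where "X \<in> C" "(g, a) \<in> X" "(h, b) \<in> X" using common by blast
    then show "((\<lambda>x. g x + h x), a + b) \<in> \<Union>C" using dominated_graphD(2)[OF dg] by blast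
  next
    fix c g a assume "(g, a) \<in> \<Union>C"
    then obtain X where "X \<in> C" "(g, a) \<in> X" by blast
    then show "((\<lambda>x. c * g x), c * a) \<in> \<Union>C" using dominated_graphD(3)[OF dg] by blast
  next
    fix g a assume "(g, a) \<in> \<Union>C"
    then obtain X where "X \<in> C" "(g, a) \<in> X" by blast
    then show "g \<in> E" "a \<le> p g" using dominated_graphD(4,5)[OF dg] by blast+
  qed
qed

lemma maximal_dominated_graph_exists:
  assumes G0: "dominated_graph G0"
  obtains M where "dominated_graph M" "G0 \<subseteq> M" "\<And>M'. dominated_graph M' \<Longrightarrow> M \<subseteq> M' \<Longrightarrow> M' = M"
proof -
  define \<A> where "\<A> = {G. dominated_graph G \<and> G0 \<subseteq> G}"
  have "\<forall>C\<in>chains \<A>. \<exists>U\<in>\<A>. \<forall>X\<in>C. X \<subseteq> U"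
  proof
    fix C assume C: "C \<in> chains \<A>"
    show "\<exists>U\<in>\<A>. \<forall>X\<in>C. X \<subseteq> U"
    proof (cases "C = {}")
      case True
      have "G0 \<in> \<A>" using G0 unfolding \<A>_def by blast
      then show ?thesis using True by blast
    next
      case False
      have CA: "C \<subseteq> \<A>" using chainsD2[OF C] .
      have "dominated_graph (\<Union>C)"
      proof (rule dominated_graph_chain_Union[OF False])
        show "dominated_graph X" if "X \<in> C" for X using CA that unfolding \<A>_def by blast
        show "X \<subseteq> Y \<or> Y \<subseteq> X" if "X \<in> C" "Y \<in> C" for X Y using chainsD[OF C that] .
      qed
      moreover have "G0 \<subseteq> \<Union>C" using False CA unfolding \<A>_def by blast
      ultimately have "\<Union>C \<in> \<A>" unfolding \<A>_def by blast
      then show ?thesis by blast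
    qed
  qed
  from Zorn_Lemma2[OF this] obtain M where M: "M \<in> \<A>" "\<forall>X\<in>\<A>. M \<subseteq> X \<longrightarrow> X = M"
    by blast
  show thesis
  proof (rule that)
    show "dominated_graph M" "G0 \<subseteq> M" using M(1) unfolding \<A>_def by auto
    then show "M' = M" if "dominated_graph M'" "M \<subseteq> M'" for M'
      using M(2) that unfolding \<A>_def by blast
  qed
qed

theorem Hahn_Banach:
  assumes G0: "dominated_graph G0"
  obtains \<psi> where "\<And>g h. g \<in> E \<Longrightarrow> h \<in> E \<Longrightarrow> \<psi> (\<lambda>x. g x + h x) = \<psi> g + \<psi> h"
    and "\<And>c g. g \<in> E \<Longrightarrow> \<psi> (\<lambda>x. c * g x) = c * \<psi> g"
    and "\<And>g. g \<in> E \<Longrightarrow> \<psi> g \<le> p g"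
    and "\<And>g a. (g, a) \<in> G0 \<Longrightarrow> \<psi> g = a"
proof -
  obtain M where dM: "dominated_graph M" and G0M: "G0 \<subseteq> M"
    and max: "\<And>M'. dominated_graph M' \<Longrightarrow> M \<subseteq> M' \<Longrightarrow> M' = M"
    using maximal_dominated_graph_exists[OF G0] by blast
  have total: "\<exists>a. (g, a) \<in> M" if g: "g \<in> E" for g
  proof (rule ccontr)
    assume "\<nexists>a. (g, a) \<in> M"
    then obtain M' where M': "dominated_graph M'" "M \<subset> M'"
      using dominated_graph_extend[OF dM g] by blast
    then show False using max[of M'] by blast
  qed
  define \<psi> where "\<psi> g = (THE a. (g, a) \<in> M)" for g
  have \<psi>: "\<psi> g = a" if ga: "(g, a) \<in> M" for g a
    unfolding \<psi>_def by (intro the_equality ga) (rule dominated_graphD(1)[OF dM _ ga])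
  have \<psi>M: "(g, \<psi> g) \<in> M" if g: "g \<in> E" for g
  proof -
    obtain a where "(g, a) \<in> M" using total[OF g] by blast
    then show ?thesis using \<psi> by simp
  qed
  show thesis
  proof (rule that)
    show "\<psi> (\<lambda>x. g x + h x) = \<psi> g + \<psi> h" if "g \<in> E" "h \<in> E" for g h
      by (rule \<psi>[OF dominated_graphD(2)[OF dM \<psi>M[OF that(1)] \<psi>M[OF that(2)]]])
    show "\<psi> (\<lambda>x. c * g x) = c * \<psi> g" if "g \<in> E" for c g
      by (rule \<psi>[OF dominated_graphD(3)[OF dM \<psi>M[OF that]]])
    show "\<psi> g \<le> p g" if "g \<in> E" for g
      by (rule dominated_graphD(5)[OF dM \<psi>M[OF that]])
    show "\<psi> g = a" if "(g, a) \<in> G0" for g a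
      using \<psi> G0M that by blast
  qed
qed

end

section \<open>Norm-one functionals on Lip0 as integrals against charges\<close>

lemma optimal_unit_iff:
  "is_ba \<mu> \<and> optimal z0 \<mu> \<and> ba_norm \<mu> = 1 \<longleftrightarrow>
     positive_charge \<mu> \<and> \<mu> offdiag = 1 \<and> dual_norm z0 (Phi_star \<mu>) = 1"
proof
  assume a: "is_ba \<mu> \<and> optimal z0 \<mu> \<and> ba_norm \<mu> = 1"
  then have "positive_charge \<mu>"
    unfolding positive_charge_def is_ba_def optimal_def ba_positive_def by blast
  then show "positive_charge \<mu> \<and> \<mu> offdiag = 1 \<and> dual_norm z0 (Phi_star \<mu>) = 1"
    using a positive_charge_is_ba(2)[of \<mu>] unfolding optimal_def by auto
next
  assume "positive_charge \<mu> \<and> \<mu> offdiag = 1 \<and> dual_norm z0 (Phi_star \<mu>) = 1"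
  then show "is_ba \<mu> \<and> optimal z0 \<mu> \<and> ba_norm \<mu> = 1"
    using positive_charge_is_ba charge_nonneg unfolding optimal_def ba_positive_def by auto
qed

lemma dual_norm_set_bdd_above:
  assumes "is_lip0_functional z0 \<phi>"
  shows "bdd_above {\<bar>\<phi> g\<bar> | g. g \<in> Lip0 z0 \<and> lipnorm g \<le> 1}"
proof -
  obtain C where C: "\<And>g. g \<in> Lip0 z0 \<Longrightarrow> \<bar>\<phi> g\<bar> \<le> C * lipnorm g"
    using assms unfolding is_lip0_functional_def by blast
  have "v \<le> \<bar>C\<bar>" if v: "v \<in> {\<bar>\<phi> g\<bar> | g. g \<in> Lip0 z0 \<and> lipnorm g \<le> 1}" for v
  proof -
    obtain g where g: "g \<in> Lip0 z0" "lipnorm g \<le> 1" "v = \<bar>\<phi> g\<bar>" using v by blast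
    then have "0 \<le> lipnorm g" using lipnorm_nonneg by (auto simp: Lip0_iff_lipschitz)
    then have "C * lipnorm g \<le> \<bar>C\<bar> * lipnorm g" by (intro mult_right_mono) auto
    also have "\<dots> \<le> \<bar>C\<bar>" using g(2) by (intro mult_left_le) auto
    finally show "v \<le> \<bar>C\<bar>" using C[OF g(1)] g(3) by simp
  qed
  then show ?thesis by (rule bdd_aboveI)
qed

lemma dual_norm_bound:
  assumes \<phi>: "is_lip0_functional z0 \<phi>" and f: "f \<in> Lip0 z0"
  shows "\<bar>\<phi> f\<bar> \<le> dual_norm z0 \<phi> * lipnorm f"
proof -
  have cmult: "\<And>c g. g \<in> Lip0 z0 \<Longrightarrow> \<phi> (\<lambda>x. c * g x) = c * \<phi> g"
    using \<phi> unfolding is_lip0_functional_def by blast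
  obtain L where L: "L-lipschitz_on UNIV f" using f by (auto simp: Lip0_iff_lipschitz)
  define l where "l = lipnorm f"
  have l: "0 \<le> l" unfolding l_def by (rule lipnorm_nonneg[OF L])
  show ?thesis
  proof (cases "l = 0")
    case True
    then have "0-lipschitz_on UNIV f" using lipschitz_lipnorm[OF L] unfolding l_def by simp
    then have "f x = f z0" for x by (auto simp: lipschitz_on_def dist_real_def)
    then have "f = (\<lambda>x. 0 * f x)" using f by (auto simp: Lip0_def)
    then have "\<phi> f = 0" using cmult[OF f, of 0] by simp
    then show ?thesis using True unfolding l_def by simp
  next
    case False
    then have l: "l > 0" using l by simp
    have g: "(\<lambda>x. (1/l) * f x) \<in> Lip0 z0" by (rule Lip0_cmult[OF f])
    have "((1/l) * l)-lipschitz_on UNIV (\<lambda>x. (1/l) * f x)"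
      using lipschitz_on_cmult_real_nonneg[OF lipschitz_lipnorm[OF L], of "1/l"] l unfolding l_def by simp
    then have "lipnorm (\<lambda>x. (1/l) * f x) \<le> 1"
      using l lipnorm_le_iff[of _ "\<lambda>x. (1/l) * f x" 1] by simp
    then have "\<bar>\<phi> (\<lambda>x. (1/l) * f x)\<bar> \<le> dual_norm z0 \<phi>"
      unfolding dual_norm_def using g dual_norm_set_bdd_above[OF \<phi>] by (intro cSup_upper) auto
    moreover have "\<phi> (\<lambda>x. (1/l) * f x) = (1/l) * \<phi> f" by (rule cmult[OF f])
    ultimately have "\<bar>(1/l) * \<phi> f\<bar> \<le> dual_norm z0 \<phi>" by (simp only:)
    then have "\<bar>\<phi> f\<bar> / l \<le> dual_norm z0 \<phi>" using l by (simp add: abs_mult)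
    then show ?thesis using l unfolding l_def by (simp add: divide_le_eq)
  qed
qed

lemma slice_nonempty:
  assumes \<phi>: "is_lip0_functional z0 \<phi>" and dn: "dual_norm z0 \<phi> = 1" and \<alpha>: "\<alpha> > 0"
  obtains f where "f \<in> slice z0 \<phi> \<alpha>"
proof -
  define D where "D = {\<bar>\<phi> f\<bar> | f. f \<in> Lip0 z0 \<and> lipnorm f \<le> 1}"
  have "\<bar>\<phi> (\<lambda>x. 0)\<bar> \<in> D"
    unfolding D_def by (auto intro!: exI[of _ "\<lambda>x. 0"] simp: Lip0_zero lipnorm_zero)
  then have "D \<noteq> {}" by blast
  then have "\<exists>v\<in>D. v > 1 - \<alpha>" using dn \<alpha> unfolding dual_norm_def D_def by (intro less_cSupD) auto
  then obtain f where f: "f \<in> Lip0 z0" "lipnorm f \<le> 1" "\<bar>\<phi> f\<bar> > 1 - \<alpha>" unfolding D_def by blast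
  have neg: "\<phi> (\<lambda>x. (-1) * f x) = (-1) * \<phi> f" using \<phi> f(1) unfolding is_lip0_functional_def by blast
  have neg_ball: "(\<lambda>x. (-1) * f x) \<in> Lip0 z0 \<and> lipnorm (\<lambda>x. (-1) * f x) \<le> 1"
    using f(1,2) Lip0_unit_ball_iff[of f z0] Lip0_unit_ball_iff[of "\<lambda>x. (-1) * f x" z0] by simp
  show thesis
  proof (cases "\<phi> f \<ge> 0")
    case True
    then show thesis using that[of f] f unfolding slice_def by simp
  next
    case False
    then show thesis using that[of "\<lambda>x. (-1) * f x"] f neg neg_ball unfolding slice_def by simp
  qed
qed

lemma Sup_offdiag_le:
  fixes g :: "'a \<times> 'a \<Rightarrow> real"
  assumes "(offdiag :: ('a \<times> 'a) set) \<noteq> {}" "\<And>z. z \<in> offdiag \<Longrightarrow> g z \<le> K"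
  shows "Sup (g ` (offdiag :: ('a \<times> 'a) set)) \<le> K"
  by (rule cSup_least) (use assms in auto)

lemma sublinear_on_Sup_offdiag:
  assumes ne: "(offdiag :: ('a \<times> 'a) set) \<noteq> {}"
  shows "sublinear_on {g :: 'a \<times> 'a \<Rightarrow> real. bounded (g ` offdiag)} (\<lambda>g. Sup (g ` offdiag))"
proof
  have up: "g z \<le> Sup (g ` offdiag)" if "bounded (g ` offdiag)" "z \<in> offdiag" for g :: "'a \<times> 'a \<Rightarrow> real" and z
    using that by (intro cSup_upper bounded_imp_bdd_above) auto
  fix g h :: "'a \<times> 'a \<Rightarrow> real" and c :: real
  assume g: "g \<in> {g. bounded (g ` offdiag)}"
  show "(\<lambda>x. c * g x) \<in> {g. bounded (g ` offdiag)}" using g by (simp add: bounded_cmult_comp)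
  {
    assume h: "h \<in> {g. bounded (g ` offdiag)}"
    show "(\<lambda>x. g x + h x) \<in> {g. bounded (g ` offdiag)}" using g h by (simp add: bounded_plus_comp)
    show "Sup ((\<lambda>x. g x + h x) ` offdiag) \<le> Sup (g ` offdiag) + Sup (h ` offdiag)"
      using g h up by (intro Sup_offdiag_le[OF ne] add_mono) auto
  }
  assume c: "c > 0"
  have "Sup ((\<lambda>x. c * g x) ` offdiag) \<le> c * Sup (g ` offdiag)"
    using g up c by (intro Sup_offdiag_le[OF ne] mult_left_mono) auto
  moreover have "Sup (g ` offdiag) \<le> Sup ((\<lambda>x. c * g x) ` offdiag) / c"
    using g up[of "\<lambda>x. c * g x"] c
    by (intro Sup_offdiag_le[OF ne]) (auto simp: bounded_cmult_comp le_divide_eq mult.commute)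
  ultimately show "Sup ((\<lambda>x. c * g x) ` offdiag) = c * Sup (g ` offdiag)"
    using c by (simp add: le_divide_eq mult.commute)
qed

locale dominated_by_Sup =
  fixes \<psi> :: "('a \<times> 'a \<Rightarrow> real) \<Rightarrow> real"
  assumes offdiag_nonempty: "(offdiag :: ('a \<times> 'a) set) \<noteq> {}"
    and add: "bounded (g ` offdiag) \<Longrightarrow> bounded (h ` offdiag) \<Longrightarrow> \<psi> (\<lambda>z. g z + h z) = \<psi> g + \<psi> h"
    and cmult: "bounded (g ` offdiag) \<Longrightarrow> \<psi> (\<lambda>z. c * g z) = c * \<psi> g"
    and le_Sup: "bounded (g ` offdiag) \<Longrightarrow> \<psi> g \<le> Sup (g ` offdiag)"
begin

definition charge :: "('a \<times> 'a) set \<Rightarrow> real" where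
  "charge A = \<psi> (indicator A)"

lemma abs_le:
  assumes g: "bounded (g ` offdiag)" and K: "\<And>z. z \<in> offdiag \<Longrightarrow> \<bar>g z\<bar> \<le> K"
  shows "\<bar>\<psi> g\<bar> \<le> K"
proof -
  have "\<psi> g \<le> Sup (g ` offdiag)" by (rule le_Sup[OF g])
  also have "\<dots> \<le> K" using K by (intro Sup_offdiag_le[OF offdiag_nonempty]) (simp add: abs_le_iff)
  finally have "\<psi> g \<le> K" .
  moreover have "- \<psi> g \<le> K"
  proof -
    have "- \<psi> g = \<psi> (\<lambda>z. (-1) * g z)" using cmult[OF g, of "-1"] by simp
    also have "\<dots> \<le> Sup ((\<lambda>z. (-1) * g z) ` offdiag)" by (rule le_Sup[OF bounded_cmult_comp[OF g]])
    also have "\<dots> \<le> K" using K by (intro Sup_offdiag_le[OF offdiag_nonempty]) (simp add: abs_le_iff)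
    finally show ?thesis .
  qed
  ultimately show ?thesis by simp
qed

lemma positive_charge: "positive_charge charge"
  unfolding positive_charge_def charge_def
proof (intro conjI allI impI)
  fix A B :: "('a \<times> 'a) set" assume "A \<subseteq> offdiag \<and> B \<subseteq> offdiag \<and> A \<inter> B = {}"
  then have "indicator (A \<union> B) z = (indicator A z + indicator B z :: real)" for z
    by (auto simp: indicator_def)
  then have "indicator (A \<union> B) = (\<lambda>z. indicator A z + indicator B z :: real)" by blast
  then show "\<psi> (indicator (A \<union> B)) = \<psi> (indicator A) + \<psi> (indicator B)"
    by (simp add: add bounded_indicator)
next
  fix A :: "('a \<times> 'a) set"
  have "- \<psi> (indicator A) = \<psi> (\<lambda>z. (-1) * indicator A z)"
    using cmult[OF bounded_indicator, of "-1"] by simp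
  also have "\<dots> \<le> Sup ((\<lambda>z. (-1) * indicator A z) ` offdiag)"
    by (rule le_Sup[OF bounded_cmult_comp[OF bounded_indicator]])
  also have "\<dots> \<le> 0" by (rule Sup_offdiag_le[OF offdiag_nonempty]) (simp add: indicator_def)
  finally show "0 \<le> \<psi> (indicator A)" by simp
qed

lemma charge_offdiag: "charge offdiag = 1"
proof -
  have "\<bar>charge offdiag\<bar> \<le> 1" unfolding charge_def by (rule abs_le[OF bounded_indicator]) simp
  moreover have "- charge offdiag = \<psi> (\<lambda>z. (-1) * indicator offdiag z)"
    unfolding charge_def using cmult[OF bounded_indicator, of "-1"] by simp
  moreover have "\<dots> \<le> Sup ((\<lambda>z. (-1) * indicator offdiag z) ` (offdiag :: ('a \<times> 'a) set))"
    by (rule le_Sup[OF bounded_cmult_comp[OF bounded_indicator]])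
  moreover have "\<dots> \<le> -1" by (rule Sup_offdiag_le[OF offdiag_nonempty]) simp
  ultimately show ?thesis by linarith
qed

lemma simple_function:
  assumes "finite F"
  shows "\<psi> (\<lambda>z. \<Sum>B\<in>F. c B * indicator B z) = (\<Sum>B\<in>F. c B * charge B)"
  using assms
proof (induction F rule: finite_induct)
  case empty
  then show ?case using cmult[OF bounded_indicator, of 0 "{}"] by simp
next
  case (insert B F)
  have "bounded ((\<lambda>z. \<Sum>B\<in>F. c B * indicator B z) ` offdiag)"
    using insert(1) by (intro bounded_sum_comp bounded_cmult_comp bounded_indicator)
  then have "\<psi> (\<lambda>z. c B * indicator B z + (\<Sum>B\<in>F. c B * indicator B z))
      = \<psi> (\<lambda>z. c B * indicator B z) + \<psi> (\<lambda>z. \<Sum>B\<in>F. c B * indicator B z)"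
    by (rule add[OF bounded_cmult_comp[OF bounded_indicator]])
  also have "\<psi> (\<lambda>z. c B * indicator B z) = c B * charge B"
    unfolding charge_def by (rule cmult[OF bounded_indicator])
  finally show ?case by (simp only: insert.IH sum.insert[OF insert(1,2)])
qed

theorem ba_integral_charge:
  assumes h: "bounded (h ` offdiag)"
  shows "ba_integral charge h = \<psi> h"
proof (rule ba_integral_eqI[OF positive_charge h, where C = 1])
  fix \<delta> :: real assume d: "\<delta> > 0"
  obtain P t where P: "fine_tagged_partition h \<delta> P t" using fine_tagged_partition_exists[OF h d] .
  then have P': "is_partition offdiag P" "oscillation_le h \<delta> P" "tagging P t"
    by (simp_all add: fine_tagged_partition_def)
  define s where "s = (\<lambda>z. \<Sum>B\<in>P. h (t B) * indicator B z)"
  have fin: "finite P" using P' by (simp add: is_partition_def)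
  have s: "bounded (s ` offdiag)"
    unfolding s_def by (intro bounded_sum_comp[OF fin] bounded_cmult_comp bounded_indicator)
  have "\<psi> s = riemann_sum charge h P t"
    unfolding s_def riemann_sum_def by (rule simple_function[OF fin])
  moreover have "\<bar>h z - s z\<bar> \<le> \<delta>" if z: "z \<in> offdiag" for z
  proof -
    have "z \<in> \<Union>P" using P'(1) z by (simp add: is_partition_def)
    then obtain B0 where B0: "B0 \<in> P" "z \<in> B0" by blast
    have "B \<inter> B0 = {}" if "B \<in> P - {B0}" for B
      using P' B0(1) that unfolding is_partition_def by blast
    then have "(\<Sum>B\<in>P - {B0}. h (t B) * indicator B z) = 0"
      using B0(2) by (intro sum.neutral) (auto simp: indicator_def)
    then have "s z = h (t B0)"
      unfolding s_def using sum.remove[OF fin B0(1), of "\<lambda>B. h (t B) * indicator B z"] B0(2) by simp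
    then show ?thesis using P' B0 by (auto simp: oscillation_le_def tagging_def)
  qed
  then have "\<bar>\<psi> (\<lambda>z. h z + (-1) * s z)\<bar> \<le> \<delta>"
    by (intro abs_le bounded_plus_comp[OF h bounded_cmult_comp[OF s]]) auto
  moreover have "\<psi> (\<lambda>z. h z + (-1) * s z) = \<psi> h - \<psi> s"
    using add[OF h bounded_cmult_comp[OF s, of "-1"]] cmult[OF s, of "-1"] by simp
  ultimately have "\<bar>riemann_sum charge h P t - \<psi> h\<bar> \<le> 1 * \<delta>" by simp
  then show "\<exists>P t. fine_tagged_partition h \<delta> P t \<and> \<bar>riemann_sum charge h P t - \<psi> h\<bar> \<le> 1 * \<delta>"
    using P by blast
qed

end

lemma slope_graph_dominated:
  fixes z0 :: "'a::metric_space"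
  assumes ne: "(offdiag :: ('a \<times> 'a) set) \<noteq> {}"
    and \<phi>: "is_lip0_functional z0 \<phi>" and dn: "dual_norm z0 \<phi> = 1"
  shows "sublinear_on.dominated_graph {g. bounded (g ` offdiag)} (\<lambda>g. Sup (g ` (offdiag :: ('a \<times> 'a) set)))
           {(slope f, \<phi> f) | f. f \<in> Lip0 z0}"
    (is "sublinear_on.dominated_graph ?E ?p ?G")
proof -
  interpret sublinear_on ?E ?p by (rule sublinear_on_Sup_offdiag[OF ne])
  show ?thesis
    unfolding dominated_graph_def
  proof (intro conjI allI impI)
    have \<phi>_add: "\<And>f g. f \<in> Lip0 z0 \<Longrightarrow> g \<in> Lip0 z0 \<Longrightarrow> \<phi> (\<lambda>x. f x + g x) = \<phi> f + \<phi> g"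
      and \<phi>_cmult: "\<And>c f. f \<in> Lip0 z0 \<Longrightarrow> \<phi> (\<lambda>x. c * f x) = c * \<phi> f"
      using \<phi> unfolding is_lip0_functional_def by blast+
    show "?G \<noteq> {}" using Lip0_zero by blast
    fix g a assume "(g, a) \<in> ?G"
    then obtain f where f: "f \<in> Lip0 z0" "g = slope f" "a = \<phi> f" by blast
    {
      fix b assume "(g, b) \<in> ?G"
      then show "a = b" using f slope_inj by blast
    next
      fix h b assume "(h, b) \<in> ?G"
      then obtain f' where f': "f' \<in> Lip0 z0" "h = slope f'" "b = \<phi> f'" by blast
      have "(slope (\<lambda>x. f x + f' x), \<phi> (\<lambda>x. f x + f' x)) \<in> ?G" using Lip0_add[OF f(1) f'(1)] by blast
      then show "((\<lambda>x. g x + h x), a + b) \<in> ?G" using f f' \<phi>_add[OF f(1) f'(1)] by (simp add: slope_add)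
    next
      fix c :: real
      have "(slope (\<lambda>x. c * f x), \<phi> (\<lambda>x. c * f x)) \<in> ?G" using Lip0_cmult[OF f(1)] by blast
      then show "((\<lambda>x. c * g x), c * a) \<in> ?G" using f \<phi>_cmult[OF f(1)] by (simp add: slope_cmult)
    }
    obtain C where C: "C-lipschitz_on UNIV f" using f(1) by (auto simp: Lip0_iff_lipschitz)
    show "g \<in> ?E" unfolding f(2) by (simp add: bounded_slope[OF C])
    have "a \<le> lipnorm f" using dual_norm_bound[OF \<phi> f(1)] dn f(3) by simp
    also have "\<dots> \<le> ?p g" unfolding f(2) by (rule lipnorm_le_Sup_slope[OF C ne])
    finally show "a \<le> ?p g" .
  qed
qed

theorem lip0_functional_representation:
  fixes z0 :: "'a::metric_space"
  assumes ne: "(offdiag :: ('a \<times> 'a) set) \<noteq> {}"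
    and \<phi>: "is_lip0_functional z0 \<phi>" and dn: "dual_norm z0 \<phi> = 1"
  obtains \<mu> where "positive_charge \<mu>" "\<mu> offdiag = 1" "\<And>f. f \<in> Lip0 z0 \<Longrightarrow> Phi_star \<mu> f = \<phi> f"
proof -
  interpret sublinear_on "{g :: 'a \<times> 'a \<Rightarrow> real. bounded (g ` offdiag)}" "\<lambda>g. Sup (g ` offdiag)"
    by (rule sublinear_on_Sup_offdiag[OF ne])
  obtain \<psi> where \<psi>_add: "\<And>g h. bounded (g ` offdiag) \<Longrightarrow> bounded (h ` offdiag) \<Longrightarrow> \<psi> (\<lambda>x. g x + h x) = \<psi> g + \<psi> h"
    and \<psi>_cmult: "\<And>c g. bounded (g ` offdiag) \<Longrightarrow> \<psi> (\<lambda>x. c * g x) = c * \<psi> g"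
    and \<psi>_le: "\<And>g. bounded (g ` offdiag) \<Longrightarrow> \<psi> g \<le> Sup (g ` offdiag)"
    and \<psi>_slope: "\<And>g a. (g, a) \<in> {(slope f, \<phi> f) | f. f \<in> Lip0 z0} \<Longrightarrow> \<psi> g = a"
    using Hahn_Banach[OF slope_graph_dominated[OF ne \<phi> dn]] by auto
  interpret \<psi>: dominated_by_Sup \<psi>
    using ne \<psi>_add \<psi>_cmult \<psi>_le by unfold_locales auto
  show thesis
  proof (rule that[OF \<psi>.positive_charge \<psi>.charge_offdiag])
    fix f assume f: "f \<in> Lip0 z0"
    then obtain C where "C-lipschitz_on UNIV f" by (auto simp: Lip0_iff_lipschitz)
    then have "Phi_star \<psi>.charge f = \<psi> (slope f)"
      unfolding Phi_star_slope by (intro \<psi>.ba_integral_charge bounded_slope)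
    also have "\<dots> = \<phi> f" using \<psi>_slope f by blast
    finally show "Phi_star \<psi>.charge f = \<phi> f" .
  qed
qed

lemma dual_norm_offdiag_empty:
  fixes z0 :: "'a::metric_space"
  assumes "(offdiag :: ('a \<times> 'a) set) = {}" "is_lip0_functional z0 \<phi>"
  shows "dual_norm z0 \<phi> = 0"
proof -
  have "\<And>c f. f \<in> Lip0 z0 \<Longrightarrow> \<phi> (\<lambda>x. c * f x) = c * \<phi> f"
    using assms(2) unfolding is_lip0_functional_def by blast
  from this[of "\<lambda>x. 0" 0, OF Lip0_zero] have zero: "\<phi> (\<lambda>x. 0) = 0" by simp
  have "{\<bar>\<phi> f\<bar> | f. f \<in> Lip0 z0 \<and> lipnorm f \<le> 1} = {0}"
  proof
    show "{\<bar>\<phi> f\<bar> | f. f \<in> Lip0 z0 \<and> lipnorm f \<le> 1} \<subseteq> {0}"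
      using Lip0_offdiag_empty[OF assms(1)] zero by auto
    show "{0} \<subseteq> {\<bar>\<phi> f\<bar> | f. f \<in> Lip0 z0 \<and> lipnorm f \<le> 1}"
    proof -
      have "lipnorm (\<lambda>x :: 'a. 0 :: real) \<le> 1" by (simp add: lipnorm_zero)
      then show ?thesis using Lip0_zero[of z0] zero by (auto intro!: exI[of _ "\<lambda>x. 0"])
    qed
  qed
  then show ?thesis unfolding dual_norm_def by simp
qed

lemma representing_charges:
  fixes z0 :: "'a::metric_space"
  assumes ne: "(offdiag :: ('a \<times> 'a) set) \<noteq> {}"
    and \<phi>: "\<And>i. i \<in> I \<Longrightarrow> is_lip0_functional z0 (\<phi> i) \<and> dual_norm z0 (\<phi> i) = 1"
  obtains M :: "'i \<Rightarrow> ('a \<times> 'a) set \<Rightarrow> real"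
  where "\<And>i. i \<in> I \<Longrightarrow> is_ba (M i) \<and> optimal z0 (M i) \<and> ba_norm (M i) = 1"
    and "\<And>i. i \<in> I \<Longrightarrow> positive_charge (M i) \<and> M i offdiag = 1"
    and "\<And>i f. i \<in> I \<Longrightarrow> f \<in> Lip0 z0 \<Longrightarrow> Phi_star (M i) f = \<phi> i f"
proof -
  have "\<forall>i\<in>I. \<exists>M. positive_charge M \<and> M offdiag = 1 \<and> (\<forall>f\<in>Lip0 z0. Phi_star M f = \<phi> i f)"
    using lip0_functional_representation[OF ne] \<phi> by metis
  then obtain M where M: "\<And>i. i \<in> I \<Longrightarrow>
      positive_charge (M i) \<and> M i offdiag = 1 \<and> (\<forall>f\<in>Lip0 z0. Phi_star (M i) f = \<phi> i f)"
    by (metis bchoice)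
  have "dual_norm z0 (Phi_star (M i)) = dual_norm z0 (\<phi> i)" if "i \<in> I" for i
    unfolding dual_norm_def using M[OF that] by (metis (no_types, lifting))
  then have "is_ba (M i) \<and> optimal z0 (M i) \<and> ba_norm (M i) = 1" if "i \<in> I" for i
    using M \<phi> optimal_unit_iff that by metis
  then show thesis using that M by blast
qed

section \<open>Cyclic monotonicity and steep 1-Lipschitz functions\<close>

lemma sum_rotate:
  fixes g :: "nat \<Rightarrow> 'b::comm_monoid_add"
  assumes "k > 0"
  shows "(\<Sum>i<k. g ((i + 1) mod k)) = (\<Sum>i<k. g i)"
proof -
  obtain m where k: "k = Suc m" using assms by (cases k) auto
  have "(\<Sum>i<Suc m. g ((i + 1) mod Suc m)) = (\<Sum>i<m. g ((i + 1) mod Suc m)) + g 0"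
    by simp
  also have "(\<Sum>i<m. g ((i + 1) mod Suc m)) = (\<Sum>i<m. g (Suc i))"
    by (rule sum.cong) auto
  also have "(\<Sum>i<m. g (Suc i)) + g 0 = (\<Sum>i<Suc m. g i)"
    by (subst sum.lessThan_Suc_shift) (simp add: add.commute)
  finally show ?thesis using k by simp
qed

lemma cyc_mono_if_steep:
  assumes lip: "1-lipschitz_on UNIV f" and steep: "\<And>x y. (x, y) \<in> T \<Longrightarrow> \<gamma> * dist x y \<le> f x - f y"
  shows "cyc_mono \<gamma> T"
  unfolding cyc_mono_def
proof (intro allI impI)
  fix ps :: "('a \<times> 'a) list" assume ps: "ps \<noteq> [] \<and> set ps \<subseteq> T"
  define k where "k = length ps"
  have k: "k > 0" using ps unfolding k_def by simp
  define a where "a i = f (snd (ps ! i))" for i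
  have term_ge: "a i - a ((i + 1) mod k) \<le>
      min (dist (fst (ps ! i)) (snd (ps ! ((i + 1) mod k))) - \<gamma> * dist (fst (ps ! i)) (snd (ps ! i)))
          (dist (snd (ps ! i)) (snd (ps ! ((i + 1) mod k))))"
    if i: "i < k" for i
  proof -
    obtain x y where xy: "ps ! i = (x, y)" by (cases "ps ! i")
    define y' where "y' = snd (ps ! ((i + 1) mod k))"
    have "ps ! i \<in> T" using ps i unfolding k_def by (meson nth_mem subsetD)
    then have "\<gamma> * dist x y \<le> f x - f y" using steep xy by simp
    moreover have "f x - f y' \<le> dist x y'" "f y - f y' \<le> dist y y'"
      using lipschitz_onD[OF lip, of x y'] lipschitz_onD[OF lip, of y y'] by (auto simp: dist_real_def)
    ultimately have "f y - f y' \<le> dist x y' - \<gamma> * dist x y" "f y - f y' \<le> dist y y'" by linarith+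
    then show ?thesis unfolding a_def xy y'_def[symmetric] by simp
  qed
  have "(\<Sum>i<k. a i - a ((i + 1) mod k)) = 0"
    using sum_rotate[OF k, of a] by (simp add: sum_subtractf)
  moreover have "(\<Sum>i<k. a i - a ((i + 1) mod k)) \<le> (\<Sum>i<k. min (dist (fst (ps ! i)) (snd (ps ! ((i + 1) mod k)))
      - \<gamma> * dist (fst (ps ! i)) (snd (ps ! i))) (dist (snd (ps ! i)) (snd (ps ! ((i + 1) mod k)))))"
    using term_ge by (intro sum_mono) simp
  ultimately show "0 \<le> (\<Sum>i<length ps. min (dist (fst (ps ! i)) (snd (ps ! ((i + 1) mod length ps)))
      - \<gamma> * dist (fst (ps ! i)) (snd (ps ! i))) (dist (snd (ps ! i)) (snd (ps ! ((i + 1) mod length ps)))))"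
    unfolding k_def by simp
qed

text \<open>\<open>chain_cost \<gamma> b [(x\<^sub>1, y\<^sub>1), \<dots>, (x\<^sub>k, y\<^sub>k)] z\<close> is the cost
  \<open>d(b, x\<^sub>k) - \<gamma> d(x\<^sub>k, y\<^sub>k) + d(y\<^sub>k, x\<^sub>k\<^sub>-\<^sub>1) - \<dots> - \<gamma> d(x\<^sub>1, y\<^sub>1) + d(y\<^sub>1, z)\<close>
  of walking from \<open>b\<close> to \<open>z\<close> through the pairs, gaining \<open>\<gamma> d(x\<^sub>i, y\<^sub>i)\<close> on each of them.
  Its infimum over chains in \<open>T\<close> is the steep function of \<open>cyc_mono_imp_steep\<close>, in the spirit of
  Rockafellar's construction of a potential for a cyclically monotone set.\<close>

fun chain_cost :: "real \<Rightarrow> 'a::metric_space \<Rightarrow> ('a \<times> 'a) list \<Rightarrow> 'a \<Rightarrow> real" where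
  "chain_cost \<gamma> b [] z = dist b z"
| "chain_cost \<gamma> b ((x, y) # ps) z = chain_cost \<gamma> b ps x - \<gamma> * dist x y + dist y z"

fun path_cost :: "real \<Rightarrow> ('a::metric_space \<times> 'a) list \<Rightarrow> real" where
  "path_cost \<gamma> [] = 0"
| "path_cost \<gamma> [p] = - \<gamma> * dist (fst p) (snd p)"
| "path_cost \<gamma> (p # q # r) = dist (fst p) (snd q) - \<gamma> * dist (fst p) (snd p) + path_cost \<gamma> (q # r)"

lemma chain_cost_path_cost:
  "chain_cost \<gamma> b (p # qs) z = dist (snd p) z + path_cost \<gamma> (p # qs) + dist b (fst (last (p # qs)))"
proof (induction qs arbitrary: p z)
  case Nil
  then show ?case by (cases p) simp
next
  case (Cons q r)
  obtain x y where p: "p = (x, y)" by (cases p)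
  have "chain_cost \<gamma> b (p # q # r) z = chain_cost \<gamma> b (q # r) x - \<gamma> * dist x y + dist y z"
    using p by simp
  then show ?case using Cons.IH[of q x] p by (simp add: dist_commute)
qed

lemma path_cost_eq_sum:
  "ps \<noteq> [] \<Longrightarrow> path_cost \<gamma> ps =
     (\<Sum>i < length ps - 1. dist (fst (ps ! i)) (snd (ps ! (i + 1))) - \<gamma> * dist (fst (ps ! i)) (snd (ps ! i)))
     - \<gamma> * dist (fst (last ps)) (snd (last ps))"
proof (induction ps)
  case (Cons p qs)
  show ?case
  proof (cases qs)
    case (Cons q r)
    have "(\<Sum>i < length (p # q # r) - 1. dist (fst ((p # q # r) ! i)) (snd ((p # q # r) ! (i + 1)))
            - \<gamma> * dist (fst ((p # q # r) ! i)) (snd ((p # q # r) ! i)))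
        = (dist (fst p) (snd q) - \<gamma> * dist (fst p) (snd p)) +
          (\<Sum>i < length r. dist (fst ((q # r) ! i)) (snd ((q # r) ! (i + 1)))
            - \<gamma> * dist (fst ((q # r) ! i)) (snd ((q # r) ! i)))"
      by (simp add: sum.lessThan_Suc_shift del: sum.lessThan_Suc)
    then show ?thesis using Cons.IH Cons by simp
  qed simp
qed simp

lemma cyclic_sum_eq_path_cost:
  assumes "ps \<noteq> []"
  shows "(\<Sum>i<length ps. dist (fst (ps ! i)) (snd (ps ! ((i + 1) mod length ps))) - \<gamma> * dist (fst (ps ! i)) (snd (ps ! i)))
     = path_cost \<gamma> ps + dist (fst (last ps)) (snd (hd ps))"
proof -
  obtain m where m: "length ps = Suc m" using assms by (cases "length ps") auto
  have "(\<Sum>i<m. dist (fst (ps ! i)) (snd (ps ! ((i + 1) mod Suc m))) - \<gamma> * dist (fst (ps ! i)) (snd (ps ! i)))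
     = (\<Sum>i<m. dist (fst (ps ! i)) (snd (ps ! (i + 1))) - \<gamma> * dist (fst (ps ! i)) (snd (ps ! i)))"
    by (rule sum.cong) auto
  moreover have "ps ! m = last ps" "ps ! ((m + 1) mod Suc m) = hd ps"
    using m assms by (simp_all add: last_conv_nth hd_conv_nth)
  ultimately show ?thesis using path_cost_eq_sum[OF assms, of \<gamma>] m by simp
qed

lemma chain_cost_lower:
  assumes cm: "cyc_mono \<gamma> T" and ps: "set ps \<subseteq> T"
  shows "- dist z b \<le> chain_cost \<gamma> b ps z"
proof (cases ps)
  case Nil
  then show ?thesis by (simp add: dist_commute)
next
  case (Cons p qs)
  have "0 \<le> (\<Sum>i<length ps. min (dist (fst (ps ! i)) (snd (ps ! ((i + 1) mod length ps))) - \<gamma> * dist (fst (ps ! i)) (snd (ps ! i)))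
                  (dist (snd (ps ! i)) (snd (ps ! ((i + 1) mod length ps)))))"
    using cm ps Cons unfolding cyc_mono_def by blast
  also have "\<dots> \<le> (\<Sum>i<length ps. dist (fst (ps ! i)) (snd (ps ! ((i + 1) mod length ps))) - \<gamma> * dist (fst (ps ! i)) (snd (ps ! i)))"
    by (rule sum_mono) simp
  also have "\<dots> = path_cost \<gamma> ps + dist (fst (last ps)) (snd p)"
    using cyclic_sum_eq_path_cost[of ps \<gamma>] Cons by simp
  finally have "0 \<le> path_cost \<gamma> ps + dist (fst (last ps)) (snd p)" .
  moreover have "dist (fst (last ps)) (snd p) \<le> dist (fst (last ps)) b + dist b z + dist z (snd p)"
    using dist_triangle[of "fst (last ps)" "snd p" b] dist_triangle[of b "snd p" z] by linarith
  ultimately show ?thesis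
    using chain_cost_path_cost[of \<gamma> b p qs z] Cons by (simp add: dist_commute)
qed

lemma chain_cost_lipschitz: "chain_cost \<gamma> b ps z' \<le> chain_cost \<gamma> b ps z + dist z z'"
proof (cases ps)
  case Nil
  then show ?thesis using dist_triangle[of b z' z] by (simp add: dist_commute)
next
  case (Cons p qs)
  then show ?thesis using dist_triangle[of "snd p" z' z] by (cases p) (simp add: dist_commute)
qed

lemma cyc_mono_imp_steep:
  fixes z0 :: "'a::metric_space"
  assumes cm: "cyc_mono \<gamma> T"
  obtains f where "f z0 = 0" "1-lipschitz_on UNIV f" "\<And>x y. (x, y) \<in> T \<Longrightarrow> \<gamma> * dist x y \<le> f x - f y"
proof -
  define W where "W z = {chain_cost \<gamma> z0 ps z | ps. set ps \<subseteq> T}" for z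
  define F where "F z = Inf (W z)" for z
  have Wne: "W z \<noteq> {}" for z
    unfolding W_def by (auto intro!: exI[of _ "[]"])
  have Wbdd: "bdd_below (W z)" for z
    unfolding W_def bdd_below_def using chain_cost_lower[OF cm] by blast
  have F_le: "F z \<le> chain_cost \<gamma> z0 ps z" if "set ps \<subseteq> T" for z ps
    unfolding F_def by (rule cInf_lower[OF _ Wbdd]) (use that in \<open>auto simp: W_def\<close>)
  have F_lip: "F z' \<le> F z + dist z z'" for z z'
  proof -
    have "F z' - dist z z' \<le> F z"
      unfolding F_def[of z]
    proof (rule cInf_greatest[OF Wne])
      fix w assume "w \<in> W z"
      then obtain ps where ps: "set ps \<subseteq> T" "w = chain_cost \<gamma> z0 ps z" unfolding W_def by blast
      then show "F z' - dist z z' \<le> w" using F_le[OF ps(1), of z'] chain_cost_lipschitz[of \<gamma> z0 ps z' z] by simp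
    qed
    then show ?thesis by simp
  qed
  have F_steep: "F y + \<gamma> * dist x y \<le> F x" if xy: "(x, y) \<in> T" for x y
    unfolding F_def[of x]
  proof (rule cInf_greatest[OF Wne])
    fix w assume "w \<in> W x"
    then obtain ps where ps: "set ps \<subseteq> T" "w = chain_cost \<gamma> z0 ps x" unfolding W_def by blast
    then have "F y \<le> chain_cost \<gamma> z0 ((x, y) # ps) y" using xy by (intro F_le) auto
    then show "F y + \<gamma> * dist x y \<le> w" using ps by simp
  qed
  show thesis
  proof (rule that[of "\<lambda>z. F z - F z0"])
    have "\<bar>F x - F y\<bar> \<le> dist x y" for x y
      using F_lip[of x y] F_lip[of y x] by (simp add: dist_commute abs_le_iff)
    then show "1-lipschitz_on UNIV (\<lambda>z. F z - F z0)"
      by (intro lipschitz_onI) (auto simp: dist_real_def)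
    show "\<gamma> * dist x y \<le> (F x - F z0) - (F y - F z0)" if "(x, y) \<in> T" for x y
      using F_steep[OF that] by simp
  qed simp
qed

lemma weighted_sum_diff_eq:
  "((\<Sum>i\<in>I. lam i * f i x) - (\<Sum>i\<in>I. lam i * g i x)) - ((\<Sum>i\<in>I. lam i * f i y) - (\<Sum>i\<in>I. lam i * g i y))
   = (\<Sum>i\<in>I. lam i * ((f i x - f i y) - (g i x - g i y)))"
  for lam :: "'i \<Rightarrow> real"
proof -
  have "(\<Sum>i\<in>I. lam i * ((f i x - f i y) - (g i x - g i y)))
     = (\<Sum>i\<in>I. (lam i * f i x - lam i * g i x) - (lam i * f i y - lam i * g i y))"
    by (rule sum.cong) (auto simp: algebra_simps)
  then show ?thesis by (simp add: sum_subtractf)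
qed

lemma lipschitz_convex_combination_diff:
  fixes f g :: "'i \<Rightarrow> 'a::metric_space \<Rightarrow> real"
  assumes lam: "\<forall>i\<in>I. 0 \<le> lam i" "(\<Sum>i\<in>I. lam i) = 1"
    and f: "\<forall>i\<in>I. 1-lipschitz_on UNIV (f i)" and g: "\<forall>i\<in>I. 1-lipschitz_on UNIV (g i)"
  shows "2-lipschitz_on UNIV (\<lambda>x. (\<Sum>i\<in>I. lam i * f i x) - (\<Sum>i\<in>I. lam i * g i x))"
proof (rule lipschitz_onI)
  fix x y :: 'a
  have "\<bar>(\<Sum>i\<in>I. lam i * ((f i x - f i y) - (g i x - g i y)))\<bar>
      \<le> (\<Sum>i\<in>I. \<bar>lam i * ((f i x - f i y) - (g i x - g i y))\<bar>)" by (rule sum_abs)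
  also have "\<dots> \<le> (\<Sum>i\<in>I. lam i * (2 * dist x y))"
  proof (rule sum_mono)
    fix i assume i: "i \<in> I"
    have "\<bar>f i x - f i y\<bar> \<le> dist x y" "\<bar>g i x - g i y\<bar> \<le> dist x y"
      using lipschitz_onD[of 1 UNIV "f i" x y] lipschitz_onD[of 1 UNIV "g i" x y] f g i
      by (auto simp: dist_real_def)
    then show "\<bar>lam i * ((f i x - f i y) - (g i x - g i y))\<bar> \<le> lam i * (2 * dist x y)"
      using lam(1) i by (simp add: abs_mult mult_left_mono)
  qed
  also have "\<dots> = 2 * dist x y" using lam(2) by (simp add: sum_distrib_right[symmetric])
  finally show "dist ((\<Sum>i\<in>I. lam i * f i x) - (\<Sum>i\<in>I. lam i * g i x))
      ((\<Sum>i\<in>I. lam i * f i y) - (\<Sum>i\<in>I. lam i * g i y)) \<le> 2 * dist x y"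
    by (simp only: dist_real_def weighted_sum_diff_eq)
qed simp

lemma lipnorm_average_diff_le_2:
  fixes f h :: "'i \<Rightarrow> 'a::metric_space \<Rightarrow> real"
  assumes lam: "\<forall>i\<in>I. 0 \<le> lam i" "(\<Sum>i\<in>I. lam i) = 1"
    and fh: "\<forall>i\<in>I. f i \<in> slice z0 (\<phi> i) (\<alpha> i) \<and> h i \<in> slice z0 (\<phi> i) (\<alpha> i)"
  shows "lipnorm (\<lambda>x. (\<Sum>i\<in>I. lam i * f i x) - (\<Sum>i\<in>I. lam i * h i x)) \<le> 2"
proof -
  have L: "2-lipschitz_on UNIV (\<lambda>x. (\<Sum>i\<in>I. lam i * f i x) - (\<Sum>i\<in>I. lam i * h i x))"
    using fh by (intro lipschitz_convex_combination_diff[OF lam]) (auto simp: slice_iff)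
  show ?thesis using lipnorm_le_iff[OF L, of 2] L by simp
qed

lemma lipnorm_average_diff_ge:
  fixes F H :: "'i \<Rightarrow> 'a::metric_space \<Rightarrow> real"
  assumes lam: "\<forall>i\<in>I. 0 \<le> lam i" "(\<Sum>i\<in>I. lam i) = 1" and uv: "u \<noteq> v"
    and F: "\<forall>i\<in>I. 1-lipschitz_on UNIV (F i) \<and> \<gamma> * dist u v \<le> F i u - F i v"
    and H: "\<forall>i\<in>I. 1-lipschitz_on UNIV (H i) \<and> \<gamma> * dist v u \<le> H i v - H i u"
  shows "2 * \<gamma> \<le> lipnorm (\<lambda>x. (\<Sum>i\<in>I. lam i * F i x) - (\<Sum>i\<in>I. lam i * H i x))"
proof -
  have "(\<Sum>i\<in>I. lam i * (2 * \<gamma> * dist u v)) \<le> (\<Sum>i\<in>I. lam i * ((F i u - F i v) - (H i u - H i v)))"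
  proof (rule sum_mono)
    fix i assume "i \<in> I"
    then have "\<gamma> * dist u v \<le> F i u - F i v" "\<gamma> * dist u v \<le> H i v - H i u"
      using F H by (auto simp: dist_commute)
    then have "2 * \<gamma> * dist u v \<le> (F i u - F i v) - (H i u - H i v)" by linarith
    then show "lam i * (2 * \<gamma> * dist u v) \<le> lam i * ((F i u - F i v) - (H i u - H i v))"
      using lam(1) \<open>i \<in> I\<close> by (intro mult_left_mono) auto
  qed
  then have "2 * \<gamma> * dist u v \<le> ((\<Sum>i\<in>I. lam i * F i u) - (\<Sum>i\<in>I. lam i * H i u))
      - ((\<Sum>i\<in>I. lam i * F i v) - (\<Sum>i\<in>I. lam i * H i v))"
    using lam(2) unfolding weighted_sum_diff_eq by (simp add: sum_distrib_right[symmetric])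
  then have "2 * \<gamma> \<le> \<bar>((\<Sum>i\<in>I. lam i * F i u) - (\<Sum>i\<in>I. lam i * H i u))
      - ((\<Sum>i\<in>I. lam i * F i v) - (\<Sum>i\<in>I. lam i * H i v))\<bar> / dist u v"
    using uv by (simp add: le_divide_eq)
  also have "\<dots> \<le> lipnorm (\<lambda>x. (\<Sum>i\<in>I. lam i * F i x) - (\<Sum>i\<in>I. lam i * H i x))"
    using lipschitz_convex_combination_diff[OF lam] F H uv by (intro slope_le_lipnorm) auto
  finally show ?thesis .
qed

lemma Sup_eq_if_scaled_elements:
  fixes X :: "real set"
  assumes c: "0 \<le> c" and \<gamma>0: "\<gamma>0 < 1" and le: "\<And>x. x \<in> X \<Longrightarrow> x \<le> c"
    and approx: "\<And>\<gamma>. \<gamma>0 < \<gamma> \<Longrightarrow> \<gamma> < 1 \<Longrightarrow> \<exists>x\<in>X. \<gamma> * c \<le> x"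
  shows "Sup X = c"
proof (rule cSup_eq_non_empty)
  show "X \<noteq> {}" using approx[of "(1 + \<gamma>0) / 2"] \<gamma>0 by auto
  show "x \<le> c" if "x \<in> X" for x using le that .
  fix y assume y: "\<And>x. x \<in> X \<Longrightarrow> x \<le> y"
  show "c \<le> y"
  proof (rule field_le_mult_one_interval)
    fix z :: real assume z: "0 < z" "z < 1"
    define \<gamma> where "\<gamma> = max z ((1 + \<gamma>0) / 2)"
    have "\<gamma>0 < (1 + \<gamma>0) / 2" "(1 + \<gamma>0) / 2 < 1" using \<gamma>0 by auto
    then have "\<gamma>0 < \<gamma>" "\<gamma> < 1" using z unfolding \<gamma>_def by (auto simp: less_max_iff_disj)
    then obtain x where x: "x \<in> X" "\<gamma> * c \<le> x" using approx by blast
    have "z * c \<le> \<gamma> * c" using c unfolding \<gamma>_def by (intro mult_right_mono) auto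
    then show "z * c \<le> y" using x y[OF x(1)] by linarith
  qed
qed

lemma SD2P_diverging_pair:
  fixes z0 :: "'a::metric_space"
  assumes sd: "SD2P z0" and n: "n \<ge> 1"
    and \<phi>: "\<And>i. i \<in> {1..n} \<Longrightarrow> is_lip0_functional z0 (\<phi> i) \<and> dual_norm z0 (\<phi> i) = 1"
    and \<alpha>: "\<alpha> > 0" and \<delta>: "0 < \<delta>" "\<delta> \<le> 2"
  obtains f g u v where "u \<noteq> v" "\<And>i. i \<in> {1..n} \<Longrightarrow> f i \<in> slice z0 (\<phi> i) \<alpha> \<and> g i \<in> slice z0 (\<phi> i) \<alpha>"
    and "real n * ((2 - \<delta>) * dist u v) < (\<Sum>i\<in>{1..n}. (f i u - f i v) - (g i u - g i v))"
proof -
  define G where "G = {h. \<exists>f :: nat \<Rightarrow> 'a \<Rightarrow> real. (\<forall>i\<in>{1..n}. f i \<in> slice z0 (\<phi> i) \<alpha>) \<and>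
                          h = (\<lambda>x. \<Sum>i\<in>{1..n}. 1 / real n * f i x)}"
  define X where "X = {lipnorm (\<lambda>x. g x - h x) | g h. g \<in> G \<and> h \<in> G}"
  have "(\<Sum>i\<in>{1..n}. 1 / real n) = 1" using n by simp
  then have "lip_diam G = 2"
    unfolding G_def using sd[unfolded SD2P_def, rule_format, of n "\<lambda>_. 1 / real n" \<phi> "\<lambda>_. \<alpha>"] n \<phi> \<alpha>
    by simp
  then have SX: "Sup X = 2" unfolding lip_diam_def X_def .
  have "\<forall>i\<in>{1..n}. \<exists>f. f \<in> slice z0 (\<phi> i) \<alpha>" using slice_nonempty \<phi> \<alpha> by metis
  then obtain f0 where "\<forall>i\<in>{1..n}. f0 i \<in> slice z0 (\<phi> i) \<alpha>" by (metis bchoice)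
  then have "(\<lambda>x. \<Sum>i\<in>{1..n}. 1 / real n * f0 i x) \<in> G" unfolding G_def by blast
  then have "X \<noteq> {}" unfolding X_def by blast
  then have "\<exists>v\<in>X. v > 2 - \<delta>" using SX \<delta> by (intro less_cSupD) auto
  then obtain f g where fg: "\<And>i. i \<in> {1..n} \<Longrightarrow> f i \<in> slice z0 (\<phi> i) \<alpha> \<and> g i \<in> slice z0 (\<phi> i) \<alpha>"
    and big: "lipnorm (\<lambda>x. (\<Sum>i\<in>{1..n}. 1 / real n * f i x) - (\<Sum>i\<in>{1..n}. 1 / real n * g i x)) > 2 - \<delta>"
    unfolding X_def G_def by blast
  define h where "h x = (\<Sum>i\<in>{1..n}. f i x - g i x) / real n" for x
  have h_eq: "(\<lambda>x. (\<Sum>i\<in>{1..n}. 1 / real n * f i x) - (\<Sum>i\<in>{1..n}. 1 / real n * g i x)) = h"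
    unfolding h_def by (auto simp: sum_subtractf sum_divide_distrib[symmetric] diff_divide_distrib)
  have "\<exists>x y. x \<noteq> y \<and> \<bar>h x - h y\<bar> / dist x y > 2 - \<delta>"
  proof (rule ccontr)
    assume "\<not> (\<exists>x y. x \<noteq> y \<and> \<bar>h x - h y\<bar> / dist x y > 2 - \<delta>)"
    then have "lipnorm h \<le> 2 - \<delta>" using \<delta>(2) by (intro lipnorm_le) (auto simp: not_less)
    then show False using big h_eq by simp
  qed
  then obtain x y where xy: "x \<noteq> y" "\<bar>h x - h y\<bar> / dist x y > 2 - \<delta>" by blast
  obtain u v where uv: "u \<noteq> v" "(2 - \<delta>) * dist u v < h u - h v"
  proof (cases "h x \<ge> h y")
    case True
    show thesis by (rule that[of x y]) (use xy True in \<open>simp_all add: less_divide_eq\<close>)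
  next
    case False
    show thesis by (rule that[of y x]) (use xy False in \<open>simp_all add: less_divide_eq dist_commute\<close>)
  qed
  have "real n * (h u - h v) = (\<Sum>i\<in>{1..n}. (f i u - f i v) - (g i u - g i v))"
    unfolding h_def using n by (simp add: sum_subtractf[symmetric] algebra_simps)
  moreover have "real n * ((2 - \<delta>) * dist u v) < real n * (h u - h v)" using uv(2) n by simp
  ultimately show thesis using that[OF uv(1) fg] by simp
qed

lemma term_large_if_sum_large:
  fixes E :: "'i \<Rightarrow> real"
  assumes "finite I" "j \<in> I" "\<And>i. i \<in> I \<Longrightarrow> E i \<le> B" "real (card I) * B - \<epsilon> < (\<Sum>i\<in>I. E i)"
  shows "B - \<epsilon> < E j"
proof -
  have "0 < card I" using assms(1,2) card_gt_0_iff by blast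
  then have card: "real (card (I - {j})) = real (card I) - 1" using assms(2) by (simp add: of_nat_diff)
  have "(\<Sum>i\<in>I. E i) = E j + (\<Sum>i\<in>I - {j}. E i)" using sum.remove[OF assms(1,2)] .
  also have "(\<Sum>i\<in>I - {j}. E i) \<le> real (card (I - {j})) * B"
    using assms(3) sum_bounded_above[of "I - {j}" E B] by simp
  finally show ?thesis using assms(4) card by (simp add: algebra_simps)
qed

lemma steep_at_diverging_pair:
  assumes n: "n \<ge> 1" and j: "j \<in> {1..n}"
    and lip: "\<And>i. i \<in> {1..n} \<Longrightarrow> 1-lipschitz_on UNIV (f i) \<and> 1-lipschitz_on UNIV (g i)"
    and big: "real n * ((2 - (1 - \<gamma>) / real n) * dist u v) < (\<Sum>i\<in>{1..n}. (f i u - f i v) - (g i u - g i v))"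
  shows "\<gamma> * dist u v \<le> f j u - f j v" "\<gamma> * dist v u \<le> g j v - g j u"
proof -
  have diff_le: "f i x - f i y \<le> dist x y" "g i x - g i y \<le> dist x y" if "i \<in> {1..n}" for i x y
    using lipschitz_onD[of 1 UNIV "f i" x y] lipschitz_onD[of 1 UNIV "g i" x y] lip[OF that]
    by (auto simp: dist_real_def)
  have "2 * dist u v - (1 - \<gamma>) * dist u v < (f j u - f j v) - (g j u - g j v)"
  proof (rule term_large_if_sum_large[OF _ j])
    show "(f i u - f i v) - (g i u - g i v) \<le> 2 * dist u v" if "i \<in> {1..n}" for i
      using diff_le[OF that, of u v] diff_le[OF that, of v u] by (simp add: dist_commute)
    have "real n * ((2 - (1 - \<gamma>) / real n) * dist u v) = real n * (2 * dist u v) - (1 - \<gamma>) * dist u v"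
      using n by (simp add: field_simps)
    then show "real (card {1..n}) * (2 * dist u v) - (1 - \<gamma>) * dist u v
        < (\<Sum>i\<in>{1..n}. (f i u - f i v) - (g i u - g i v))"
      using big by simp
  qed simp
  then show "\<gamma> * dist u v \<le> f j u - f j v" "\<gamma> * dist v u \<le> g j v - g j u"
    using diff_le[OF j, of u v] diff_le[OF j, of v u] by (simp_all add: dist_commute algebra_simps)
qed

definition steep_pairs :: "real \<Rightarrow> ('a::metric_space \<Rightarrow> real) \<Rightarrow> ('a \<times> 'a) set" where
  "steep_pairs \<gamma> f = {(x, y). x \<noteq> y \<and> \<gamma> * dist x y \<le> f x - f y}"

lemma steep_pairs_subset_offdiag: "steep_pairs \<gamma> f \<subseteq> offdiag"
  by (auto simp: steep_pairs_def offdiag_def)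

lemma ba_integral_slope_two_step_bound:
  assumes \<mu>: "positive_charge \<mu>" and A: "A \<subseteq> offdiag" and h: "bounded (h ` offdiag)"
    and le: "\<And>z. z \<in> offdiag \<Longrightarrow> h z \<le> a * indicator A z + b * indicator (offdiag - A) z"
  shows "ba_integral \<mu> h \<le> a * \<mu> A + b * (\<mu> offdiag - \<mu> A)"
proof -
  have "bounded ((\<lambda>z. a * indicator A z + b * indicator (offdiag - A) z) ` offdiag)"
    by (intro bounded_plus_comp bounded_cmult_comp bounded_indicator)
  then have "ba_integral \<mu> h \<le> ba_integral \<mu> (\<lambda>z. a * indicator A z + b * indicator (offdiag - A) z)"
    by (rule ba_integral_mono[OF \<mu> h _ le])
  also have "\<dots> = a * \<mu> A + b * (\<mu> offdiag - \<mu> A)" by (rule ba_integral_two_step[OF \<mu> A])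
  finally show ?thesis .
qed

text \<open>Off the common steep set the sum of the two slopes is below \<open>1 + \<gamma>\<close>, and it is at most 2 on it.\<close>
lemma Phi_star_sum_le_common_steep:
  assumes \<mu>: "positive_charge \<mu>" "\<mu> offdiag = 1"
    and f: "1-lipschitz_on UNIV f" and g: "1-lipschitz_on UNIV g"
  shows "Phi_star \<mu> f + Phi_star \<mu> g \<le> (1 + \<gamma>) + (1 - \<gamma>) * \<mu> (steep_pairs \<gamma> f \<inter> steep_pairs \<gamma> g)"
proof -
  define A where "A = steep_pairs \<gamma> f \<inter> steep_pairs \<gamma> g"
  have A: "A \<subseteq> offdiag" unfolding A_def using steep_pairs_subset_offdiag by blast
  have "ba_integral \<mu> (\<lambda>z. slope f z + slope g z) \<le> 2 * \<mu> A + (1 + \<gamma>) * (\<mu> offdiag - \<mu> A)"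
  proof (rule ba_integral_slope_two_step_bound[OF \<mu>(1) A bounded_plus_comp[OF bounded_slope[OF f] bounded_slope[OF g]]])
    fix z :: "'a \<times> 'a" assume z: "z \<in> offdiag"
    then obtain x y where zxy: "z = (x, y)" "x \<noteq> y" by (auto simp: offdiag_def)
    have le1: "slope f z \<le> 1" "slope g z \<le> 1" using abs_slope_le[OF f] abs_slope_le[OF g] abs_le_D1 by blast+
    show "slope f z + slope g z \<le> 2 * indicator A z + (1 + \<gamma>) * indicator (offdiag - A) z"
    proof (cases "z \<in> A")
      case False
      have d: "0 < dist x y" using zxy by simp
      from False have "f x - f y < \<gamma> * dist x y \<or> g x - g y < \<gamma> * dist x y"
        using zxy unfolding A_def steep_pairs_def by auto
      then have "slope f z < \<gamma> \<or> slope g z < \<gamma>" using d zxy by (auto simp: divide_less_eq)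
      then show ?thesis using le1 z False by auto
    qed (use le1 in auto)
  qed
  then show ?thesis
    using \<mu>(2) ba_integral_add[OF \<mu>(1) bounded_slope[OF f] bounded_slope[OF g]] unfolding A_def Phi_star_slope
    by (simp add: algebra_simps)
qed

lemma common_steep_set_heavy:
  assumes \<mu>: "positive_charge \<mu>" "\<mu> offdiag = 1" and \<gamma>: "\<gamma> < 1"
    and f: "1-lipschitz_on UNIV f" "1 - (1 - \<gamma>)\<^sup>2 / 2 < Phi_star \<mu> f"
    and g: "1-lipschitz_on UNIV g" "1 - (1 - \<gamma>)\<^sup>2 / 2 < Phi_star \<mu> g"
  shows "\<gamma> \<le> \<mu> (steep_pairs \<gamma> f \<inter> steep_pairs \<gamma> g)"
proof -
  define m where "m = \<mu> (steep_pairs \<gamma> f \<inter> steep_pairs \<gamma> g)"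
  have "2 - (1 - \<gamma>)\<^sup>2 < (1 + \<gamma>) + (1 - \<gamma>) * m"
    using f(2) g(2) Phi_star_sum_le_common_steep[OF \<mu> f(1) g(1), of \<gamma>] unfolding m_def by linarith
  moreover have "(1 - \<gamma>)\<^sup>2 = 1 - 2 * \<gamma> + \<gamma> * \<gamma>" by (simp add: power2_eq_square algebra_simps)
  moreover have "(1 - \<gamma>) * m = m - \<gamma> * m" "(1 - \<gamma>) * \<gamma> = \<gamma> - \<gamma> * \<gamma>" by (simp_all add: algebra_simps)
  ultimately have "(1 - \<gamma>) * \<gamma> < (1 - \<gamma>) * m" by linarith
  then show ?thesis using \<gamma> unfolding m_def by simp
qed

lemma Phi_star_ge_if_steep:
  assumes \<mu>: "positive_charge \<mu>" "\<mu> offdiag = 1" and A: "A \<subseteq> offdiag"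
    and f: "1-lipschitz_on UNIV f" and steep: "\<And>x y. (x, y) \<in> A \<Longrightarrow> \<gamma> * dist x y \<le> f x - f y"
  shows "(1 + \<gamma>) * \<mu> A - 1 \<le> Phi_star \<mu> f"
proof -
  have "ba_integral \<mu> (\<lambda>z. - slope f z) \<le> (- \<gamma>) * \<mu> A + 1 * (\<mu> offdiag - \<mu> A)"
  proof (rule ba_integral_slope_two_step_bound[OF \<mu>(1) A])
    show "bounded ((\<lambda>z. - slope f z) ` offdiag)" using bounded_slope[OF f] by simp
    fix z :: "'a \<times> 'a" assume z: "z \<in> offdiag"
    then obtain x y where zxy: "z = (x, y)" "x \<noteq> y" by (auto simp: offdiag_def)
    show "- slope f z \<le> (- \<gamma>) * indicator A z + 1 * indicator (offdiag - A) z"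
    proof (cases "z \<in> A")
      case True
      then show ?thesis using steep zxy by (auto simp: le_divide_eq mult.commute)
    qed (use z abs_slope_le[OF f, of z] in auto)
  qed
  moreover have "ba_integral \<mu> (\<lambda>z. - slope f z) = - Phi_star \<mu> f"
    using ba_integral_cmult[OF \<mu>(1) bounded_slope[OF f], of "-1"] unfolding Phi_star_slope by simp
  ultimately show ?thesis using \<mu>(2) by (simp add: algebra_simps)
qed

lemma slice_member_if_steep:
  assumes M: "positive_charge M" "M offdiag = 1" "\<And>f. f \<in> Lip0 z0 \<Longrightarrow> Phi_star M f = \<phi> f"
    and A: "A \<subseteq> offdiag" "\<gamma> \<le> M A" and \<gamma>: "0 < \<gamma>" "3 * (1 - \<gamma>) < \<alpha>"
    and f: "f z0 = 0" "1-lipschitz_on UNIV f" and steep: "\<And>x y. (x, y) \<in> A \<Longrightarrow> \<gamma> * dist x y \<le> f x - f y"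
  shows "f \<in> slice z0 \<phi> \<alpha>"
proof -
  have "f \<in> Lip0 z0" using f Lip0_unit_ball_iff by blast
  then have "(1 + \<gamma>) * M A - 1 \<le> \<phi> f"
    using Phi_star_ge_if_steep[OF M(1,2) A(1) f(2) steep] M(3) by simp
  moreover have "(1 + \<gamma>) * \<gamma> \<le> (1 + \<gamma>) * M A" using A(2) \<gamma>(1) by simp
  moreover have "0 \<le> (1 - \<gamma>)\<^sup>2" by simp
  ultimately have "1 - \<alpha> < \<phi> f" using \<gamma>(2) by (simp add: power2_eq_square algebra_simps)
  then show ?thesis using f slice_iff by blast
qed

lemma far_slice_elements_from_witnesses:
  fixes z0 :: "'a::metric_space" and M :: "'i \<Rightarrow> ('a \<times> 'a) set \<Rightarrow> real"
  assumes lam: "\<forall>i\<in>I. 0 \<le> lam i" "(\<Sum>i\<in>I. lam i) = 1"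
    and M: "\<And>i. i \<in> I \<Longrightarrow> positive_charge (M i) \<and> M i offdiag = 1"
      "\<And>i f. i \<in> I \<Longrightarrow> f \<in> Lip0 z0 \<Longrightarrow> Phi_star (M i) f = \<phi> i f"
    and uv: "u \<noteq> v" and A: "\<And>i. i \<in> I \<Longrightarrow> A i \<subseteq> offdiag \<and> \<gamma> \<le> M i (A i) \<and>
        cyc_mono \<gamma> (A i \<union> {(u, v)}) \<and> cyc_mono \<gamma> (A i \<union> {(v, u)})"
    and \<gamma>: "0 < \<gamma>" and \<alpha>: "\<And>i. i \<in> I \<Longrightarrow> 3 * (1 - \<gamma>) < \<alpha> i"
  obtains F H where "\<And>i. i \<in> I \<Longrightarrow> F i \<in> slice z0 (\<phi> i) (\<alpha> i) \<and> H i \<in> slice z0 (\<phi> i) (\<alpha> i)"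
    and "2 * \<gamma> \<le> lipnorm (\<lambda>x. (\<Sum>i\<in>I. lam i * F i x) - (\<Sum>i\<in>I. lam i * H i x))"
proof -
  have "\<forall>i\<in>I. \<exists>F. F z0 = 0 \<and> 1-lipschitz_on UNIV F \<and>
      (\<forall>x y. (x, y) \<in> A i \<union> {(u, v)} \<longrightarrow> \<gamma> * dist x y \<le> F x - F y)"
    using A cyc_mono_imp_steep by metis
  then obtain F where F: "\<forall>i\<in>I. F i z0 = 0 \<and> 1-lipschitz_on UNIV (F i) \<and>
      (\<forall>x y. (x, y) \<in> A i \<union> {(u, v)} \<longrightarrow> \<gamma> * dist x y \<le> F i x - F i y)" by (metis bchoice)
  have "\<forall>i\<in>I. \<exists>H. H z0 = 0 \<and> 1-lipschitz_on UNIV H \<and>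
      (\<forall>x y. (x, y) \<in> A i \<union> {(v, u)} \<longrightarrow> \<gamma> * dist x y \<le> H x - H y)"
    using A cyc_mono_imp_steep by metis
  then obtain H where H: "\<forall>i\<in>I. H i z0 = 0 \<and> 1-lipschitz_on UNIV (H i) \<and>
      (\<forall>x y. (x, y) \<in> A i \<union> {(v, u)} \<longrightarrow> \<gamma> * dist x y \<le> H i x - H i y)" by (metis bchoice)
  show thesis
  proof (rule that)
    fix i assume i: "i \<in> I"
    have M_i: "positive_charge (M i)" "M i offdiag = 1" "\<And>f. f \<in> Lip0 z0 \<Longrightarrow> Phi_star (M i) f = \<phi> i f"
      using M i by auto
    have A_i: "A i \<subseteq> offdiag" "\<gamma> \<le> M i (A i)" using A[OF i] by auto
    show "F i \<in> slice z0 (\<phi> i) (\<alpha> i) \<and> H i \<in> slice z0 (\<phi> i) (\<alpha> i)"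
      using F H i by (auto intro!: slice_member_if_steep[OF M_i A_i \<gamma> \<alpha>[OF i]])
  next
    show "2 * \<gamma> \<le> lipnorm (\<lambda>x. (\<Sum>i\<in>I. lam i * F i x) - (\<Sum>i\<in>I. lam i * H i x))"
      using F H by (intro lipnorm_average_diff_ge[OF lam uv]) auto
  qed
qed

theorem SD2P_imp_cyc_mono_witnesses:
  fixes z0 :: "'a::metric_space" and \<mu> :: "nat \<Rightarrow> ('a \<times> 'a) set \<Rightarrow> real"
  assumes sd: "SD2P z0" and n: "n \<ge> 1"
    and \<mu>: "\<forall>i\<in>{1..n}. is_ba (\<mu> i) \<and> optimal z0 (\<mu> i) \<and> ba_norm (\<mu> i) = 1"
    and \<gamma>: "0 < \<gamma>" "\<gamma> < 1"
  shows "\<exists>A u v. u \<noteq> v \<and> (\<forall>i\<in>{1..n}. A i \<subseteq> offdiag \<and> \<mu> i (A i) \<ge> \<gamma> \<and>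
           cyc_mono \<gamma> (A i \<union> {(u, v)}) \<and> cyc_mono \<gamma> (A i \<union> {(v, u)}))"
proof -
  have \<mu>': "positive_charge (\<mu> i)" "\<mu> i offdiag = 1" "dual_norm z0 (Phi_star (\<mu> i)) = 1" if "i \<in> {1..n}" for i
    using \<mu> that optimal_unit_iff[of "\<mu> i" z0] by auto
  text \<open>The depth \<open>(1 - \<gamma>)\<^sup>2 / 2\<close> of the slices and the defect \<open>(1 - \<gamma>) / n\<close> of the diameter are
    tuned so that every single pair \<open>f i, g i\<close> is almost antipodal at \<open>(u, v)\<close>.\<close>
  obtain f g u v where uv: "u \<noteq> v"
    and fg: "\<And>i. i \<in> {1..n} \<Longrightarrow> f i \<in> slice z0 (Phi_star (\<mu> i)) ((1 - \<gamma>)\<^sup>2 / 2) \<and>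
        g i \<in> slice z0 (Phi_star (\<mu> i)) ((1 - \<gamma>)\<^sup>2 / 2)"
    and big: "real n * ((2 - (1 - \<gamma>) / real n) * dist u v) < (\<Sum>i\<in>{1..n}. (f i u - f i v) - (g i u - g i v))"
  proof (rule SD2P_diverging_pair[OF sd n])
    show "is_lip0_functional z0 (Phi_star (\<mu> i)) \<and> dual_norm z0 (Phi_star (\<mu> i)) = 1" if "i \<in> {1..n}" for i
      using Phi_star_lip0_functional \<mu>'[OF that] by blast
    show "0 < (1 - \<gamma>)\<^sup>2 / 2" "0 < (1 - \<gamma>) / real n" "(1 - \<gamma>) / real n \<le> 2"
      using \<gamma> n by (auto simp: field_simps)
  qed (rule that)
  have lip: "1-lipschitz_on UNIV (f i) \<and> 1-lipschitz_on UNIV (g i)" if "i \<in> {1..n}" for i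
    using fg[OF that] by (auto simp: slice_iff)
  define A where "A i = steep_pairs \<gamma> (f i) \<inter> steep_pairs \<gamma> (g i)" for i
  have "A i \<subseteq> offdiag \<and> \<mu> i (A i) \<ge> \<gamma> \<and> cyc_mono \<gamma> (A i \<union> {(u, v)}) \<and> cyc_mono \<gamma> (A i \<union> {(v, u)})"
    if i: "i \<in> {1..n}" for i
  proof (intro conjI)
    show "A i \<subseteq> offdiag" unfolding A_def using steep_pairs_subset_offdiag by blast
    show "\<gamma> \<le> \<mu> i (A i)"
      unfolding A_def using fg[OF i] \<mu>'[OF i] \<gamma>(2) by (intro common_steep_set_heavy) (auto simp: slice_iff)
    have steep_uv: "\<gamma> * dist u v \<le> f i u - f i v" "\<gamma> * dist v u \<le> g i v - g i u"
      using steep_at_diverging_pair[OF n i lip big] by auto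
    show "cyc_mono \<gamma> (A i \<union> {(u, v)})"
      using steep_uv lip[OF i] by (intro cyc_mono_if_steep[of "f i"]) (auto simp: A_def steep_pairs_def)
    show "cyc_mono \<gamma> (A i \<union> {(v, u)})"
      using steep_uv lip[OF i] by (intro cyc_mono_if_steep[of "g i"]) (auto simp: A_def steep_pairs_def)
  qed
  then show ?thesis using uv by blast
qed

theorem cyc_mono_witnesses_imp_SD2P:
  fixes z0 :: "'a::metric_space"
  assumes R: "\<And>n \<mu> \<gamma>. n \<ge> 1 \<Longrightarrow> \<forall>i\<in>{1..n}. is_ba (\<mu> i) \<and> optimal z0 (\<mu> i) \<and> ba_norm (\<mu> i) = 1 \<Longrightarrow>
      0 < \<gamma> \<Longrightarrow> \<gamma> < 1 \<Longrightarrow> \<exists>(A :: nat \<Rightarrow> ('a \<times> 'a) set) u v. u \<noteq> v \<and>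
        (\<forall>i\<in>{1..n}. A i \<subseteq> offdiag \<and> \<mu> i (A i) \<ge> \<gamma> \<and>
           cyc_mono \<gamma> (A i \<union> {(u, v)}) \<and> cyc_mono \<gamma> (A i \<union> {(v, u)}))"
  shows "SD2P z0"
  unfolding SD2P_def
proof (intro allI impI)
  fix n :: nat and lam :: "nat \<Rightarrow> real" and \<phi> :: "nat \<Rightarrow> ('a \<Rightarrow> real) \<Rightarrow> real" and \<alpha> :: "nat \<Rightarrow> real"
  assume n: "n \<ge> 1" and "(\<forall>i\<in>{1..n}. lam i \<ge> 0) \<and> (\<Sum>i\<in>{1..n}. lam i) = 1 \<and>
      (\<forall>i\<in>{1..n}. is_lip0_functional z0 (\<phi> i) \<and> dual_norm z0 (\<phi> i) = 1 \<and> \<alpha> i > 0)"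
  then have lam: "\<forall>i\<in>{1..n}. 0 \<le> lam i" "(\<Sum>i\<in>{1..n}. lam i) = 1"
    and \<phi>: "\<And>i. i \<in> {1..n} \<Longrightarrow> is_lip0_functional z0 (\<phi> i) \<and> dual_norm z0 (\<phi> i) = 1"
    and \<alpha>: "\<And>i. i \<in> {1..n} \<Longrightarrow> \<alpha> i > 0" by auto
  have one: "1 \<in> {1..n}" using n by simp
  have "(offdiag :: ('a \<times> 'a) set) \<noteq> {}"
    using dual_norm_offdiag_empty \<phi>[OF one] by fastforce
  then obtain M :: "nat \<Rightarrow> ('a \<times> 'a) set \<Rightarrow> real"
    where M_opt: "\<And>i. i \<in> {1..n} \<Longrightarrow> is_ba (M i) \<and> optimal z0 (M i) \<and> ba_norm (M i) = 1"
      and M: "\<And>i. i \<in> {1..n} \<Longrightarrow> positive_charge (M i) \<and> M i offdiag = 1"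
        "\<And>i f. i \<in> {1..n} \<Longrightarrow> f \<in> Lip0 z0 \<Longrightarrow> Phi_star (M i) f = \<phi> i f"
    using representing_charges[of "{1..n}" z0 \<phi>] \<phi> by blast
  define G where "G = {g. \<exists>f :: nat \<Rightarrow> 'a \<Rightarrow> real. (\<forall>i\<in>{1..n}. f i \<in> slice z0 (\<phi> i) (\<alpha> i)) \<and>
                          g = (\<lambda>x. \<Sum>i\<in>{1..n}. lam i * f i x)}"
  define X where "X = {lipnorm (\<lambda>x. g x - h x) | g h. g \<in> G \<and> h \<in> G}"
  define \<gamma>0 where "\<gamma>0 = 1 - min (Min (\<alpha> ` {1..n})) 1 / 3"
  have \<gamma>0: "\<gamma>0 < 1" "2 / 3 \<le> \<gamma>0" and \<alpha>_large: "\<And>i. i \<in> {1..n} \<Longrightarrow> 3 * (1 - \<gamma>0) \<le> \<alpha> i"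
    using \<alpha> one unfolding \<gamma>0_def by (auto simp: min_le_iff_disj)
  have "Sup X = 2"
  proof (rule Sup_eq_if_scaled_elements[OF _ \<gamma>0(1)])
    fix v assume "v \<in> X"
    then obtain f h where "\<forall>i\<in>{1..n}. f i \<in> slice z0 (\<phi> i) (\<alpha> i) \<and> h i \<in> slice z0 (\<phi> i) (\<alpha> i)"
      and "v = lipnorm (\<lambda>x. (\<Sum>i\<in>{1..n}. lam i * f i x) - (\<Sum>i\<in>{1..n}. lam i * h i x))"
      unfolding X_def G_def by blast
    then show "v \<le> 2" using lipnorm_average_diff_le_2[OF lam] by blast
  next
    fix \<gamma> assume \<gamma>: "\<gamma>0 < \<gamma>" "\<gamma> < 1"
    then obtain A u v where uv: "u \<noteq> v" and A: "\<forall>i\<in>{1..n}. A i \<subseteq> offdiag \<and> M i (A i) \<ge> \<gamma> \<and>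
        cyc_mono \<gamma> (A i \<union> {(u, v)}) \<and> cyc_mono \<gamma> (A i \<union> {(v, u)})"
      using R[OF n, of M \<gamma>] M_opt \<gamma>0 by auto
    have \<alpha>_\<gamma>: "3 * (1 - \<gamma>) < \<alpha> i" if "i \<in> {1..n}" for i
    proof -
      have "3 * (1 - \<gamma>) < 3 * (1 - \<gamma>0)" using \<gamma>(1) by simp
      then show ?thesis using \<alpha>_large[OF that] by linarith
    qed
    have A': "\<And>i. i \<in> {1..n} \<Longrightarrow> A i \<subseteq> offdiag \<and> \<gamma> \<le> M i (A i) \<and>
        cyc_mono \<gamma> (A i \<union> {(u, v)}) \<and> cyc_mono \<gamma> (A i \<union> {(v, u)})" using A by blast
    have \<gamma>_pos: "0 < \<gamma>" using \<gamma> \<gamma>0 by linarith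
    obtain F H where FH: "\<And>i. i \<in> {1..n} \<Longrightarrow> F i \<in> slice z0 (\<phi> i) (\<alpha> i) \<and> H i \<in> slice z0 (\<phi> i) (\<alpha> i)"
      and far: "2 * \<gamma> \<le> lipnorm (\<lambda>x. (\<Sum>i\<in>{1..n}. lam i * F i x) - (\<Sum>i\<in>{1..n}. lam i * H i x))"
      using far_slice_elements_from_witnesses[where I = "{1..n}" and M = M and \<phi> = \<phi> and \<alpha> = \<alpha>,
        OF lam M uv A' \<gamma>_pos \<alpha>_\<gamma>] by blast
    have "(\<lambda>x. \<Sum>i\<in>{1..n}. lam i * F i x) \<in> G" "(\<lambda>x. \<Sum>i\<in>{1..n}. lam i * H i x) \<in> G"
      unfolding G_def using FH by blast+
    then have "lipnorm (\<lambda>x. (\<Sum>i\<in>{1..n}. lam i * F i x) - (\<Sum>i\<in>{1..n}. lam i * H i x)) \<in> X"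
      unfolding X_def by (intro CollectI exI[of _ "\<lambda>x. \<Sum>i\<in>{1..n}. lam i * F i x"]
        exI[of _ "\<lambda>x. \<Sum>i\<in>{1..n}. lam i * H i x"]) simp
    then show "\<exists>x\<in>X. \<gamma> * 2 \<le> x" using far by (auto simp: mult.commute)
  qed simp
  then show "lip_diam G = 2" unfolding lip_diam_def X_def .
qed

theorem proposition3p5:
  fixes z0 :: "'a::metric_space"
  shows "SD2P z0 \<longleftrightarrow>
    (\<forall>n::nat. n \<ge> 1 \<longrightarrow>
      (\<forall>\<mu> :: nat \<Rightarrow> ('a \<times> 'a) set \<Rightarrow> real.
        (\<forall>i\<in>{1..n}. is_ba (\<mu> i) \<and> optimal z0 (\<mu> i) \<and> ba_norm (\<mu> i) = 1) \<longrightarrow>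
        (\<forall>\<gamma>::real. 0 < \<gamma> \<and> \<gamma> < 1 \<longrightarrow>
          (\<exists>(A :: nat \<Rightarrow> ('a \<times> 'a) set) u v. u \<noteq> v \<and>
             (\<forall>i\<in>{1..n}. A i \<subseteq> offdiag \<and> \<mu> i (A i) \<ge> \<gamma> \<and>
                cyc_mono \<gamma> (A i \<union> {(u, v)}) \<and> cyc_mono \<gamma> (A i \<union> {(v, u)}))))))"
proof
  assume "SD2P z0"
  then show "\<forall>n::nat. n \<ge> 1 \<longrightarrow> (\<forall>\<mu>. (\<forall>i\<in>{1..n}. is_ba (\<mu> i) \<and> optimal z0 (\<mu> i) \<and> ba_norm (\<mu> i) = 1) \<longrightarrow>
      (\<forall>\<gamma>::real. 0 < \<gamma> \<and> \<gamma> < 1 \<longrightarrow> (\<exists>(A :: nat \<Rightarrow> ('a \<times> 'a) set) u v. u \<noteq> v \<and>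
        (\<forall>i\<in>{1..n}. A i \<subseteq> offdiag \<and> \<mu> i (A i) \<ge> \<gamma> \<and>
           cyc_mono \<gamma> (A i \<union> {(u, v)}) \<and> cyc_mono \<gamma> (A i \<union> {(v, u)})))))"
    by (intro allI impI SD2P_imp_cyc_mono_witnesses) auto
next
  assume witnesses: "\<forall>n::nat. n \<ge> 1 \<longrightarrow> (\<forall>\<mu>. (\<forall>i\<in>{1..n}. is_ba (\<mu> i) \<and> optimal z0 (\<mu> i) \<and> ba_norm (\<mu> i) = 1) \<longrightarrow>
      (\<forall>\<gamma>::real. 0 < \<gamma> \<and> \<gamma> < 1 \<longrightarrow> (\<exists>(A :: nat \<Rightarrow> ('a \<times> 'a) set) u v. u \<noteq> v \<and>
        (\<forall>i\<in>{1..n}. A i \<subseteq> offdiag \<and> \<mu> i (A i) \<ge> \<gamma> \<and>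
           cyc_mono \<gamma> (A i \<union> {(u, v)}) \<and> cyc_mono \<gamma> (A i \<union> {(v, u)})))))"
  show "SD2P z0"
    by (rule cyc_mono_witnesses_imp_SD2P) (use witnesses in blast)
qed

end
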